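(* Let $\mathbb{K}\in\{\mathbb{R},\mathbb{C}\}$ and let $\Gamma_1,\Gamma_2\subset\mathsf{GL}_d(\mathbb{K})$ be semigroups in ping-pong position relative to open sets $U_1,U_2\subset\mathbb{P}(\mathbb{K}^d)$, $V_1,V_2\subset\mathsf{Gr}_{d-1}(\mathbb{K}^d)$. Let $\varepsilon>0$ be such that $\mathrm{dist}(\overline{U_i},\overline{V_j}):=\inf\{\mathrm{dist}(x,\mathbb{P}(W)):x\in\overline{U_i},W\in\overline{V_j}\}\ge\varepsilon$ for $\{i,j\}=\{1,2\}$, and let $0<\theta<\varepsilon^2$ and $x_i\in U_i$, $y_i\in V_i$ be such that $B_\theta(x_i)\subset U_i$ and $B_\theta(y_i)\subset V_i$ for $i=1,2$. Let $\Delta=\langle\Gamma_1,\Gamma_2\rangle$, $M=\max\{\frac{16}{\varepsilon\theta},\frac{8\sqrt{d-1}}{\varepsilon^2}\}$, and $F=\{h\in\Delta:\frac{\sigma_1}{\sigma_2}(h)<M\}$. Let $g\in\Delta\smallsetminus F$ be written as a reduced word $g=g_1\cdots g_n$, $n\ge1$, with $g_k\in(\Gamma_1\cup\Gamma_2)\smallsetminus\{I_d\}$. Then: (i) if $i(g_1)\in\{1,2\}$ is the unique index with $g_1\in\Gamma_{i(g_1)}$, then $d_{\mathbb{P}}(\Xi_1(g),U_{i(g_1)})\le\frac{\varepsilon}{8}$; (ii) if $i(g_n)\in\{1,2\}$ is the unique index with $g_n\in\Gamma_{i(g_n)}$, then $d_{\mathsf{Gr}}(\Xi_{d-1}(g^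{-1}),V_{i(g_n)})\le\frac{\varepsilon}{8}$.
   Context: $\mathbb{P}(\mathbb{K}^d)$ carries the metric $d_{\mathbb{P}}([u],[v])=\sqrt{1-\frac{|\langle u,v\rangle|^2}{\|u\|^2\|v\|^2}}$ (standard Hermitian inner product); $B_r(\cdot)$ are open balls; $\mathrm{dist}(X,Y)$ is the minimal $d_{\mathbb{P}}$-distance between subsets of $\mathbb{P}(\mathbb{K}^d)$; $\mathsf{Gr}_{d-1}(\mathbb{K}^d)$ carries the metric $d_{\mathsf{Gr}}(u^\perp,v^\perp)=d_{\mathbb{P}}([u],[v])$; distance from a point to a set is the infimum. For $g$ with singular values $\sigma_1(g)\ge\dots\ge\sigma_d(g)$ and Cartan decomposition $g=k_g\mathrm{diag}(\sigma_1(g),\dots,\sigma_d(g))k_g'$, if $\sigma_k(g)>\sigma_{k+1}(g)$ then $\Xi_k(g):=k_g\langle e_1,\dots,e_k\rangle$ (independent of choices). A point $[v]$ and hyperplane $W$ are transverse if $v\notin W$. Ping-pong position: whenever $\{i,j\}=\{1,2\}$, $\overline{U_i}$ and $\overline{V_j}$ are transverse, and for all $\gamma\in\Gamma_i\smallsetminus\{I_d\}$, $\gamma\overline{U_j}\subset U_i$ and $\gamma^{-1}\overline{V_j}\subset V_i$. A reduced word is a product of elements of $(\Gamma_1\cup\Gamma_2)\smallsetminus\{I_d\}$ with no two consecutive factors in the same $\Gamma_k$. *)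

theory Defs
  imports Complex_Main "Jordan_Normal_Form.Matrix"
begin

text \<open>The field K is represented as a subset of the complex numbers: either the reals or all of C.
  Vectors of K^d are complex vectors of dimension d with entries in K, matrices likewise.\<close>

definition Kfield :: "complex set \<Rightarrow> bool" where
  "Kfield K \<longleftrightarrow> K = \<real> \<or> K = UNIV"

definition Kvec :: "complex set \<Rightarrow> nat \<Rightarrow> complex vec \<Rightarrow> bool" where
  "Kvec K d v \<longleftrightarrow> v \<in> carrier_vec d \<and> (\<forall>i<d. v $ i \<in> K)"

definition Kmat :: "complex set \<Rightarrow> nat \<Rightarrow> complex mat \<Rightarrow> bool" where
  "Kmat K d g \<longleftrightarrow> g \<in> carrier_mat d d \<and> (\<forall>i<d. \<forall>j<d. g $$ (i,j) \<in> K)"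

definition GLK :: "complex set \<Rightarrow> nat \<Rightarrow> complex mat set" where
  "GLK K d = {g. Kmat K d g \<and> invertible_mat g}"

definition minv :: "nat \<Rightarrow> complex mat \<Rightarrow> complex mat" where
  "minv d g = (SOME h. h \<in> carrier_mat d d \<and> g * h = 1\<^sub>m d \<and> h * g = 1\<^sub>m d)"

definition cadj :: "complex mat \<Rightarrow> complex mat" where
  "cadj A = Matrix.mat (dim_col A) (dim_row A) (\<lambda>(i,j). cnj (A $$ (j,i)))"

definition unitaryK :: "complex set \<Rightarrow> nat \<Rightarrow> complex mat \<Rightarrow> bool" where
  "unitaryK K d k \<longleftrightarrow> Kmat K d k \<and> k * cadj k = 1\<^sub>m d \<and> cadj k * k = 1\<^sub>m d"

text \<open>Cartan decomposition g = k diag(sigma_1,...,sigma_d) k' (indices shifted to 0..d-1)\<close>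
definition cartan :: "complex set \<Rightarrow> nat \<Rightarrow> complex mat \<Rightarrow> complex mat \<Rightarrow> (nat \<Rightarrow> real) \<Rightarrow> complex mat \<Rightarrow> bool" where
  "cartan K d g k \<sigma> k' \<longleftrightarrow> unitaryK K d k \<and> unitaryK K d k' \<and>
     (\<forall>i<d. 0 \<le> \<sigma> i) \<and> (\<forall>i j. i \<le> j \<longrightarrow> j < d \<longrightarrow> \<sigma> j \<le> \<sigma> i) \<and>
     g = k * mat_diag d (\<lambda>i. complex_of_real (\<sigma> i)) * k'"

text \<open>singular values: sv K d g i = sigma_(i+1)(g)\<close>
definition sv :: "complex set \<Rightarrow> nat \<Rightarrow> complex mat \<Rightarrow> nat \<Rightarrow> real" where
  "sv K d g = (SOME \<sigma>. \<exists>k k'. cartan K d g k \<sigma> k')"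

definition hinner :: "complex vec \<Rightarrow> complex vec \<Rightarrow> complex" where
  "hinner u v = u \<bullet>c v"

definition nrm2 :: "complex vec \<Rightarrow> real" where
  "nrm2 u = Re (hinner u u)"

text \<open>Points of P(K^d) are represented by nonzero vectors of K^d; subsets of P(K^d) by
  sets of nonzero vectors saturated under K^* scaling.\<close>
definition PK :: "complex set \<Rightarrow> nat \<Rightarrow> complex vec set" where
  "PK K d = {v. Kvec K d v \<and> v \<noteq> 0\<^sub>v d}"

definition dP :: "complex vec \<Rightarrow> complex vec \<Rightarrow> real" where
  "dP u v = sqrt (1 - (cmod (hinner u v))\<^sup>2 / (nrm2 u * nrm2 v))"

definition projset :: "complex set \<Rightarrow> nat \<Rightarrow> complex vec set \<Rightarrow> bool" where
  "projset K d U \<longleftrightarrow> U \<subseteq> PK K d \<and> (\<forall>v\<in>U. \<forall>c\<in>K. c \<noteq> 0 \<longrightarrow> c \<cdot>\<^sub>v v \<in> U)"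

definition openP :: "complex set \<Rightarrow> nat \<Rightarrow> complex vec set \<Rightarrow> bool" where
  "openP K d U \<longleftrightarrow> projset K d U \<and> (\<forall>x\<in>U. \<exists>r>0. \<forall>y\<in>PK K d. dP x y < r \<longrightarrow> y \<in> U)"

definition closP :: "complex set \<Rightarrow> nat \<Rightarrow> complex vec set \<Rightarrow> complex vec set" where
  "closP K d U = {x \<in> PK K d. \<forall>r>0. \<exists>y\<in>U. dP x y < r}"

definition ballP :: "complex set \<Rightarrow> nat \<Rightarrow> complex vec \<Rightarrow> real \<Rightarrow> complex vec set" where
  "ballP K d x r = {y \<in> PK K d. dP x y < r}"

definition distP :: "complex vec \<Rightarrow> complex vec set \<Rightarrow> real" where
  "distP x U = Inf (dP x ` U)"

text \<open>Subsets of Gr_(d-1)(K^d)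
  are represented by saturated sets N of normal vectors, standing for {u^perp | u in N};
  the metric is d_Gr(u^perp, v^perp) = dP u v, so open sets, balls, closures and distances
  in Gr_(d-1) are openP, ballP, closP, distP applied to normal vectors.\<close>
definition hyp :: "complex set \<Rightarrow> nat \<Rightarrow> complex vec \<Rightarrow> complex vec set" where
  "hyp K d u = {x. Kvec K d x \<and> hinner x u = 0}"

definition actP :: "complex mat \<Rightarrow> complex vec set \<Rightarrow> complex vec set" where
  "actP g U = (\<lambda>v. g *\<^sub>v v) ` U"

definition actH :: "complex set \<Rightarrow> nat \<Rightarrow> complex mat \<Rightarrow> complex vec set \<Rightarrow> complex vec set" where
  "actH K d g N = {w \<in> PK K d. \<exists>u\<in>N. (\<lambda>x. g *\<^sub>v x) ` hyp K d u = hyp K d w}"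

definition pingpong :: "complex set \<Rightarrow> nat \<Rightarrow> (nat \<Rightarrow> complex mat set) \<Rightarrow>
    (nat \<Rightarrow> complex vec set) \<Rightarrow> (nat \<Rightarrow> complex vec set) \<Rightarrow> bool" where
  "pingpong K d \<Gamma> U V \<longleftrightarrow>
    (\<forall>i\<in>{1,2}. \<forall>j\<in>{1,2}. i \<noteq> j \<longrightarrow>
       (\<forall>x\<in>closP K d (U i). \<forall>u\<in>closP K d (V j). hinner x u \<noteq> 0) \<and>
       (\<forall>\<gamma>\<in>\<Gamma> i - {1\<^sub>m d}. actP \<gamma> (closP K d (U j)) \<subseteq> U i \<and>
                            actH K d (minv d \<gamma>) (closP K d (V j)) \<subseteq> V i))"

definition semigroupK :: "complex set \<Rightarrow> nat \<Rightarrow> complex mat set \<Rightarrow> bool" where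
  "semigroupK K d G \<longleftrightarrow> G \<subseteq> GLK K d \<and> (\<forall>a\<in>G. \<forall>b\<in>G. a * b \<in> G)"

definition gen2 :: "nat \<Rightarrow> complex mat set \<Rightarrow> complex mat set \<Rightarrow> complex mat set" where
  "gen2 d A B = {foldr (*) ws (1\<^sub>m d) | ws. ws \<noteq> [] \<and> set ws \<subseteq> A \<union> B}"

definition reduced :: "nat \<Rightarrow> (nat \<Rightarrow> complex mat set) \<Rightarrow> complex mat list \<Rightarrow> bool" where
  "reduced d \<Gamma> gs \<longleftrightarrow> gs \<noteq> [] \<and> (\<forall>k<length gs. gs ! k \<in> (\<Gamma> 1 \<union> \<Gamma> 2) - {1\<^sub>m d}) \<and>
     (\<forall>k. k + 1 < length gs \<longrightarrow> (\<forall>j\<in>{1,2}. \<not> (gs ! k \<in> \<Gamma> j \<and> gs ! (k+1) \<in> \<Gamma> j)))"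

definition spanFirst :: "complex set \<Rightarrow> nat \<Rightarrow> complex mat \<Rightarrow> complex vec set" where
  "spanFirst K d k = {vec d (\<lambda>r. \<Sum>j<d-1. c j * k $$ (r,j)) | c. \<forall>j<d-1. c j \<in> K}"

end

(*
  Write g = k diag(sigma) k' (Cartan decomposition, indices from 0).  Since Gamma_1 and Gamma_2 play
  ping-pong, a reduced word g with first letter in Gamma_a and last letter in Gamma_c maps the closure
  of U_b, b <> c, into U_a.  In the theta-ball around x_b one finds a point p whose component along
  the top right singular vector k'^* e_0 is at least theta/2 times its norm; then g p lies in U_a, and
  the gap sigma_1 <= (epsilon theta / 16) sigma_0 forces g p to be within
  (sigma_1 / sigma_0) (2 / theta) <= epsilon / 8 of Xi_1(g) = k e_0.
  Part (ii) is the same argument for the adjoint g^*: it acts on normals of hyperplanes as g^-1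
  acts on hyperplanes, its top singular direction is the normal of Xi_(d-1)(g^-1), and it has the
  same singular values as g.
*)
theory Submission
  imports Defs "HOL-Analysis.L2_Norm"
begin

section \<open>Hermitian inner product and projective distance\<close>

lemma hinner_sum: "v \<in> carrier_vec d \<Longrightarrow> hinner u v = (\<Sum>i<d. u $ i * cnj (v $ i))"
  unfolding hinner_def scalar_prod_def by (auto intro!: sum.cong)

lemma nrm2_sum: "v \<in> carrier_vec d \<Longrightarrow> nrm2 v = (\<Sum>i<d. (cmod (v $ i))\<^sup>2)"
  unfolding nrm2_def by (simp add: hinner_sum complex_mult_cnj cmod_def)

lemma hinner_self: "v \<in> carrier_vec d \<Longrightarrow> hinner v v = of_real (nrm2 v)"
  by (simp add: hinner_sum nrm2_sum complex_mult_cnj cmod_def)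

lemma nrm2_nonneg: "v \<in> carrier_vec d \<Longrightarrow> 0 \<le> nrm2 v"
  by (simp add: nrm2_sum sum_nonneg)

lemma nrm2_pos: assumes "v \<in> carrier_vec d" "v \<noteq> 0\<^sub>v d" shows "0 < nrm2 v"
proof -
  obtain i where i: "i < d" "v $ i \<noteq> 0" using assms by (metis carrier_vecD eq_vecI index_zero_vec)
  have "(cmod (v $ i))\<^sup>2 \<le> (\<Sum>j<d. (cmod (v $ j))\<^sup>2)"
    by (rule member_le_sum) (use i in auto)
  moreover have "0 < (cmod (v $ i))\<^sup>2" using i by simp
  ultimately show ?thesis using nrm2_sum[OF assms(1)] by linarith
qed

lemma nrm2_eq_0D: "v \<in> carrier_vec d \<Longrightarrow> nrm2 v = 0 \<Longrightarrow> v = 0\<^sub>v d"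
  using nrm2_pos by fastforce

lemma hinner_cnj_commute: "u \<in> carrier_vec d \<Longrightarrow> v \<in> carrier_vec d \<Longrightarrow> hinner v u = cnj (hinner u v)"
  by (simp add: hinner_sum mult.commute)

lemma hinner_add_left: "v \<in> carrier_vec d \<Longrightarrow> w \<in> carrier_vec d \<Longrightarrow>
   hinner (u + v) w = hinner u w + hinner v w"
  by (simp add: hinner_sum sum.distrib algebra_simps)

lemma hinner_add_right: "v \<in> carrier_vec d \<Longrightarrow> w \<in> carrier_vec d \<Longrightarrow>
   hinner u (v + w) = hinner u v + hinner u w"
  by (subst hinner_sum[of "v + w" d]) (auto simp: hinner_sum sum.distrib algebra_simps)

lemma hinner_smult_left: "w \<in> carrier_vec d \<Longrightarrow> u \<in> carrier_vec d \<Longrightarrow>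
   hinner (c \<cdot>\<^sub>v u) w = c * hinner u w"
  by (simp add: hinner_sum sum_distrib_left algebra_simps)

lemma hinner_smult_right: "u \<in> carrier_vec d \<Longrightarrow> w \<in> carrier_vec d \<Longrightarrow>
   hinner u (c \<cdot>\<^sub>v w) = cnj c * hinner u w"
  by (simp add: hinner_sum sum_distrib_left algebra_simps)

lemma nrm2_add: assumes u: "u \<in> carrier_vec d" and v: "v \<in> carrier_vec d"
  shows "nrm2 (u + v) = nrm2 u + 2 * Re (hinner u v) + nrm2 v"
  using u v unfolding nrm2_def
  by (simp add: hinner_add_left hinner_add_right hinner_cnj_commute[of u d v])

lemma nrm2_smult: "v \<in> carrier_vec d \<Longrightarrow> nrm2 (c \<cdot>\<^sub>v v) = (cmod c)\<^sup>2 * nrm2 v"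
  by (simp add: nrm2_sum sum_distrib_left norm_mult power_mult_distrib)

lemma nrm2_diff: assumes u: "u \<in> carrier_vec d" and v: "v \<in> carrier_vec d"
  shows "nrm2 (u - v) = nrm2 u - 2 * Re (hinner u v) + nrm2 v"
proof -
  have "u - v = u + (-1) \<cdot>\<^sub>v v" using u v by auto
  thus ?thesis using u v by (simp add: nrm2_add nrm2_smult hinner_smult_right)
qed

lemma hinner_Cauchy_Schwarz: assumes u: "u \<in> carrier_vec d" and v: "v \<in> carrier_vec d"
  shows "(cmod (hinner u v))\<^sup>2 \<le> nrm2 u * nrm2 v"
proof -
  let ?L = "\<lambda>w. L2_set (\<lambda>i. cmod (w $ i)) {..<d}"
  have "cmod (hinner u v) \<le> (\<Sum>i<d. cmod (u $ i * cnj (v $ i)))"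
    unfolding hinner_sum[OF v] by (rule norm_sum)
  also have "\<dots> = (\<Sum>i<d. \<bar>cmod (u $ i)\<bar> * \<bar>cmod (v $ i)\<bar>)" by (simp add: norm_mult)
  also have "\<dots> \<le> ?L u * ?L v" by (rule L2_set_mult_ineq)
  finally have "(cmod (hinner u v))\<^sup>2 \<le> (?L u * ?L v)\<^sup>2" by (intro power_mono) auto
  also have "\<dots> = nrm2 u * nrm2 v"
    unfolding power_mult_distrib L2_set_def nrm2_sum[OF u] nrm2_sum[OF v] by (simp add: sum_nonneg)
  finally show ?thesis .
qed

lemma hinner_unit_vec_right: assumes "j < d" shows "hinner z (unit_vec d j) = z $ j"
proof -
  have "hinner z (unit_vec d j) = (\<Sum>i<d. if i = j then z $ j else 0)"
    unfolding hinner_sum[OF unit_vec_carrier] by (rule sum.cong) (use assms in auto)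
  thus ?thesis using assms by simp
qed

lemma nrm2_unit_vec: assumes "j < d" shows "nrm2 (unit_vec d j) = 1"
proof -
  have "nrm2 (unit_vec d j) = (\<Sum>i<d. if i = j then 1 else 0)"
    unfolding nrm2_sum[OF unit_vec_carrier] by (rule sum.cong) (use assms in auto)
  thus ?thesis using assms by simp
qed

lemma dP_nonneg: assumes u: "u \<in> carrier_vec d" and v: "v \<in> carrier_vec d" shows "0 \<le> dP u v"
proof -
  have "(cmod (hinner u v))\<^sup>2 / (nrm2 u * nrm2 v) \<le> 1"
    using hinner_Cauchy_Schwarz[OF u v] nrm2_nonneg[OF u] nrm2_nonneg[OF v]
    by (cases "nrm2 u * nrm2 v = 0") (auto simp: divide_le_eq_1)
  thus ?thesis unfolding dP_def by simp
qed

lemma dP_le_1: assumes u: "u \<in> carrier_vec d" and v: "v \<in> carrier_vec d" shows "dP u v \<le> 1"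
  using nrm2_nonneg[OF u] nrm2_nonneg[OF v] unfolding dP_def by simp

lemma dP_self: assumes u: "u \<in> carrier_vec d" "u \<noteq> 0\<^sub>v d" shows "dP u u = 0"
  using nrm2_pos[OF u] hinner_self[OF u(1)] by (simp add: dP_def power2_eq_square)

lemma dP_smult_left: assumes u: "u \<in> carrier_vec d" and v: "v \<in> carrier_vec d" and c: "c \<noteq> 0"
  shows "dP (c \<cdot>\<^sub>v u) v = dP u v"
  using c unfolding dP_def nrm2_smult[OF u] hinner_smult_left[OF v u]
  by (simp add: norm_mult power_mult_distrib)

lemma dP_le_sqrt_nrm2_diff:
  assumes u: "u \<in> carrier_vec d" "u \<noteq> 0\<^sub>v d" and v: "v \<in> carrier_vec d" "v \<noteq> 0\<^sub>v d"
  shows "dP u v \<le> sqrt (nrm2 (u - v) / nrm2 u)"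
proof -
  define N m s where "N = nrm2 u" and "m = nrm2 v" and "s = hinner u v"
  have N: "0 < N" and m: "0 < m" using nrm2_pos u v by (auto simp: N_def m_def)
  have "(Re s)\<^sup>2 \<le> (cmod s)\<^sup>2" by (simp add: cmod_def)
  moreover have "m * (N - 2 * Re s + m) - (N * m - (cmod s)\<^sup>2) = (cmod s)\<^sup>2 - (Re s)\<^sup>2 + (Re s - m)\<^sup>2"
    by (simp add: algebra_simps power2_eq_square)
  ultimately have "N * m - (cmod s)\<^sup>2 \<le> m * (N - 2 * Re s + m)"
    by (smt (verit) zero_le_power2)
  hence "(N * m - (cmod s)\<^sup>2) / (N * m) \<le> (m * (N - 2 * Re s + m)) / (N * m)"
    using N m by (intro divide_right_mono) auto
  hence "1 - (cmod s)\<^sup>2 / (N * m) \<le> (N - 2 * Re s + m) / N"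
    using N m by (simp add: diff_divide_distrib)
  thus ?thesis unfolding dP_def nrm2_diff[OF u(1) v(1)] by (simp add: N_def m_def s_def)
qed

lemma dP_unit_vec_le:
  assumes j: "j < d" and z: "z \<in> carrier_vec d" and L: "0 < L" "L \<le> (cmod (z $ j))\<^sup>2"
    and S: "(\<Sum>i\<in>{..<d} - {j}. (cmod (z $ i))\<^sup>2) \<le> S"
  shows "dP (unit_vec d j) z \<le> sqrt (S / L)"
proof -
  define R where "R = (\<Sum>i\<in>{..<d} - {j}. (cmod (z $ i))\<^sup>2)"
  define Z where "Z = (cmod (z $ j))\<^sup>2"
  have R0: "0 \<le> R" unfolding R_def by (rule sum_nonneg) auto
  have Z0: "0 < Z" using L Z_def by linarith
  have "nrm2 z = Z + R" unfolding nrm2_sum[OF z] R_def Z_def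
    using j by (simp add: sum.remove[of "{..<d}" j])
  hence "1 - (cmod (hinner (unit_vec d j) z))\<^sup>2 / (nrm2 (unit_vec d j) * nrm2 z) = 1 - Z / (Z + R)"
    using j z hinner_cnj_commute[OF z unit_vec_carrier]
    by (simp add: hinner_unit_vec_right nrm2_unit_vec Z_def)
  also have "\<dots> = R / (Z + R)" using Z0 R0 by (simp add: field_simps)
  also have "\<dots> \<le> R / Z" using Z0 R0 by (intro divide_left_mono) auto
  also have "\<dots> \<le> S / L"
    using R0 S L Z0 unfolding R_def[symmetric] Z_def[symmetric] by (intro frac_le) auto
  finally show ?thesis unfolding dP_def by simp
qed

lemma distP_le_dP: assumes "v \<in> U" and "U \<subseteq> carrier_vec d" and "w \<in> carrier_vec d"
  shows "distP w U \<le> dP w v"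
  unfolding distP_def
proof (rule cInf_lower)
  show "dP w v \<in> dP w ` U" using assms by simp
  show "bdd_below (dP w ` U)" using assms dP_nonneg by (intro bdd_belowI[of _ 0]) blast
qed

lemma PK_carrier: "v \<in> PK K d \<Longrightarrow> v \<in> carrier_vec d \<and> v \<noteq> 0\<^sub>v d"
  by (simp add: PK_def Kvec_def)

lemma projset_subset_closP: assumes "projset K d U" shows "U \<subseteq> closP K d U"
proof
  fix x assume x: "x \<in> U"
  hence xP: "x \<in> PK K d" using assms by (auto simp: projset_def)
  hence "dP x x = 0" using PK_carrier dP_self by blast
  thus "x \<in> closP K d U" using x xP unfolding closP_def by force
qed

lemma square_mult_carrier[simp]:
  "A \<in> carrier_mat d d \<Longrightarrow> B \<in> carrier_mat d d \<Longrightarrow> A * B \<in> carrier_mat d d"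
  by (rule mult_carrier_mat)

lemma mult_mat_vec_sum: "A \<in> carrier_mat n d \<Longrightarrow> v \<in> carrier_vec d \<Longrightarrow> i < n \<Longrightarrow>
  (A *\<^sub>v v) $ i = (\<Sum>j<d. A $$ (i,j) * v $ j)"
  by (auto simp: scalar_prod_def intro!: sum.cong)

lemma mult_mat_sum: "A \<in> carrier_mat n m \<Longrightarrow> B \<in> carrier_mat m l \<Longrightarrow> i < n \<Longrightarrow> j < l \<Longrightarrow>
  (A * B) $$ (i,j) = (\<Sum>k<m. A $$ (i,k) * B $$ (k,j))"
  by (auto simp: scalar_prod_def intro!: sum.cong)

lemma mult_mat_vec_zero: "A \<in> carrier_mat n d \<Longrightarrow> A *\<^sub>v 0\<^sub>v d = 0\<^sub>v n"
  by (intro eq_vecI) (auto simp: scalar_prod_def)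

lemma mult_mat_vec_unit_vec: fixes M :: "'a :: semiring_1 mat"
  assumes M: "M \<in> carrier_mat n d" and i: "i < n" and j: "j < d"
  shows "(M *\<^sub>v unit_vec d j) $ i = M $$ (i,j)"
proof -
  have "(M *\<^sub>v unit_vec d j) $ i = (\<Sum>l<d. if l = j then M $$ (i,j) else 0)"
    unfolding mult_mat_vec_sum[OF M unit_vec_carrier i] using j by (intro sum.cong) auto
  thus ?thesis using j by simp
qed

lemma mat_eq_by_mult_vec: fixes M N :: "'a :: semiring_1 mat"
  assumes M: "M \<in> carrier_mat d d" and N: "N \<in> carrier_mat d d"
    and eq: "\<And>v. v \<in> carrier_vec d \<Longrightarrow> M *\<^sub>v v = N *\<^sub>v v"
  shows "M = N"
proof (rule eq_matI)
  fix i j assume "i < dim_row N" "j < dim_col N"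
  hence i: "i < d" and j: "j < d" using N by auto
  show "M $$ (i,j) = N $$ (i,j)"
    using mult_mat_vec_unit_vec[OF M i j] mult_mat_vec_unit_vec[OF N i j] eq[of "unit_vec d j"] by simp
qed (use M N in auto)

lemma mat_diag_cong: "(\<And>i. i < n \<Longrightarrow> f i = g i) \<Longrightarrow> mat_diag n f = mat_diag n g"
  by (auto simp: mat_diag_def intro!: eq_matI)

lemma mat_diag_mult_vec: assumes v: "v \<in> carrier_vec d"
  shows "mat_diag d e *\<^sub>v v = vec d (\<lambda>i. e i * v $ i)"
proof (rule eq_vecI)
  fix i assume "i < dim_vec (vec d (\<lambda>i. e i * v $ i))"
  hence i: "i < d" by simp
  have "(mat_diag d e *\<^sub>v v) $ i = (\<Sum>j<d. (if i = j then e j else 0) * v $ j)"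
    using v i by (subst mult_mat_vec_sum[of _ d d]) (auto simp: mat_diag_def)
  also have "\<dots> = (\<Sum>j<d. if j = i then e i * v $ i else 0)" by (rule sum.cong) auto
  finally show "(mat_diag d e *\<^sub>v v) $ i = vec d (\<lambda>i. e i * v $ i) $ i" using i by simp
qed (use v in \<open>auto simp: mat_diag_def\<close>)

lemma mult_mat_diag_mult_vec:
  assumes A: "A \<in> carrier_mat d d" and B: "B \<in> carrier_mat d d" and v: "v \<in> carrier_vec d"
  shows "(A * mat_diag d e * B) *\<^sub>v v = A *\<^sub>v vec d (\<lambda>i. e i * (B *\<^sub>v v) $ i)"
  using A B v by (simp add: assoc_mult_mat_vec[of _ d d _ d] mat_diag_mult_vec)

lemma left_inverse_eq_right_inverse: fixes g h h' :: "'a :: semiring_1 mat"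
  assumes g: "g \<in> carrier_mat d d" and h: "h \<in> carrier_mat d d" and h': "h' \<in> carrier_mat d d"
    and "g * h = 1\<^sub>m d" and "h' * g = 1\<^sub>m d"
  shows "h = h'"
proof -
  have "h' = h' * (g * h)" using assms by simp
  also have "\<dots> = (h' * g) * h" using g h h' by simp
  finally show ?thesis using assms by simp
qed

section \<open>Conjugate transpose and unitary matrices\<close>

lemma cadj_carrier[simp]: "A \<in> carrier_mat n m \<Longrightarrow> cadj A \<in> carrier_mat m n"
  by (auto simp: cadj_def)

lemma cadj_dims[simp]: "dim_row (cadj A) = dim_col A" "dim_col (cadj A) = dim_row A"
  by (auto simp: cadj_def)

lemma cadj_index: "A \<in> carrier_mat n m \<Longrightarrow> i < m \<Longrightarrow> j < n \<Longrightarrow> cadj A $$ (i,j) = cnj (A $$ (j,i))"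
  by (auto simp: cadj_def)

lemma cadj_cadj: "A \<in> carrier_mat n m \<Longrightarrow> cadj (cadj A) = A"
  by (intro eq_matI) (auto simp: cadj_def)

lemma cadj_mult_vec_carrier[simp]:
  "B \<in> carrier_mat d d \<Longrightarrow> z \<in> carrier_vec d \<Longrightarrow> cadj B *\<^sub>v z \<in> carrier_vec d"
  by (metis cadj_carrier mult_mat_vec_carrier)

lemma cadj_mult: assumes A: "A \<in> carrier_mat n m" and B: "B \<in> carrier_mat m l"
  shows "cadj (A * B) = cadj B * cadj A"
proof (rule eq_matI)
  fix i j assume "i < dim_row (cadj B * cadj A)" and "j < dim_col (cadj B * cadj A)"
  hence i: "i < l" and j: "j < n" using A B by (auto simp: cadj_def)
  have "cadj (A * B) $$ (i,j) = cnj ((A * B) $$ (j,i))"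
    using A B i j by (intro cadj_index) auto
  also have "\<dots> = (\<Sum>k<m. cnj (A $$ (j,k)) * cnj (B $$ (k,i)))"
    using A B i j by (subst mult_mat_sum[OF A B]) auto
  also have "\<dots> = (cadj B * cadj A) $$ (i,j)"
    using A B i j
    by (subst mult_mat_sum[of _ l m _ n]) (auto simp: cadj_index mult.commute intro!: sum.cong)
  finally show "cadj (A * B) $$ (i,j) = (cadj B * cadj A) $$ (i,j)" .
qed (use A B in auto)

lemma cadj_one[simp]: "cadj (1\<^sub>m n) = 1\<^sub>m n"
  by (intro eq_matI) (auto simp: cadj_def)

lemma cadj_mat_diag_real:
  "cadj (mat_diag n (\<lambda>i. complex_of_real (f i))) = mat_diag n (\<lambda>i. complex_of_real (f i))"
  by (intro eq_matI) (auto simp: cadj_def mat_diag_def)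

lemma hinner_mult_mat_vec:
  assumes A: "A \<in> carrier_mat n m" and a: "a \<in> carrier_vec m" and b: "b \<in> carrier_vec n"
  shows "hinner (A *\<^sub>v a) b = hinner a (cadj A *\<^sub>v b)"
proof -
  have "hinner (A *\<^sub>v a) b = (\<Sum>i<n. (\<Sum>j<m. A $$ (i,j) * a $ j) * cnj (b $ i))"
    using A a b by (subst hinner_sum[OF b])
      (auto simp: mult_mat_vec_sum[OF A a] simp del: index_mult_mat_vec intro!: sum.cong)
  also have "\<dots> = (\<Sum>j<m. \<Sum>i<n. A $$ (i,j) * a $ j * cnj (b $ i))"
    by (subst sum.swap) (simp add: sum_distrib_right)
  also have "\<dots> = (\<Sum>j<m. a $ j * cnj (\<Sum>i<n. cnj (A $$ (i,j)) * b $ i))"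
    by (simp add: sum_distrib_left algebra_simps)
  also have "\<dots> = hinner a (cadj A *\<^sub>v b)"
  proof -
    have "\<And>j. j < m \<Longrightarrow> (cadj A *\<^sub>v b) $ j = (\<Sum>i<n. cnj (A $$ (i,j)) * b $ i)"
      using A b by (subst mult_mat_vec_sum[of _ m n]) (auto simp: cadj_index)
    moreover have "cadj A *\<^sub>v b \<in> carrier_vec m"
      using cadj_carrier[OF A] b by (rule mult_mat_vec_carrier)
    ultimately show ?thesis by (subst hinner_sum) auto
  qed
  finally show ?thesis .
qed

definition unitary :: "nat \<Rightarrow> complex mat \<Rightarrow> bool" where
  "unitary d k \<longleftrightarrow> k \<in> carrier_mat d d \<and> k * cadj k = 1\<^sub>m d \<and> cadj k * k = 1\<^sub>m d"

lemma unitaryK_imp_unitary: "unitaryK K d k \<Longrightarrow> unitary d k"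
  by (auto simp: unitaryK_def unitary_def Kmat_def)

lemma unitary_carrier: "unitary d k \<Longrightarrow> k \<in> carrier_mat d d"
  by (simp add: unitary_def)

lemma unitary_cadj: "unitary d k \<Longrightarrow> unitary d (cadj k)"
  by (auto simp: unitary_def cadj_cadj)

lemma unitary_mult: assumes a: "unitary d a" and b: "unitary d b" shows "unitary d (a * b)"
proof -
  have ac: "a \<in> carrier_mat d d" and bc: "b \<in> carrier_mat d d" using a b by (auto simp: unitary_def)
  have ca: "cadj a \<in> carrier_mat d d" and cb: "cadj b \<in> carrier_mat d d" using ac bc by auto
  have "a * b * cadj (a * b) = a * (b * (cadj b * cadj a))"
    using assoc_mult_mat[OF ac bc mult_carrier_mat[OF cb ca]] ac bc by (simp add: cadj_mult)
  also have "b * (cadj b * cadj a) = (b * cadj b) * cadj a"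
    by (rule assoc_mult_mat[symmetric, OF bc cb ca])
  finally have 1: "a * b * cadj (a * b) = 1\<^sub>m d"
    using a b left_mult_one_mat[OF ca] by (simp add: unitary_def)
  have "cadj (a * b) * (a * b) = cadj b * (cadj a * (a * b))"
    using assoc_mult_mat[OF cb ca mult_carrier_mat[OF ac bc]] ac bc by (simp add: cadj_mult)
  also have "cadj a * (a * b) = (cadj a * a) * b" by (rule assoc_mult_mat[symmetric, OF ca ac bc])
  finally have 2: "cadj (a * b) * (a * b) = 1\<^sub>m d"
    using a b left_mult_one_mat[OF bc] by (simp add: unitary_def)
  show ?thesis using 1 2 ac bc by (simp add: unitary_def)
qed

lemma unitary_cadj_mult_vec: "unitary d k \<Longrightarrow> b \<in> carrier_vec d \<Longrightarrow> cadj k *\<^sub>v (k *\<^sub>v b) = b"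
  by (simp add: unitary_def assoc_mult_mat_vec[symmetric, of _ d d _ d])

lemma unitary_mult_cadj_vec: "unitary d k \<Longrightarrow> b \<in> carrier_vec d \<Longrightarrow> k *\<^sub>v (cadj k *\<^sub>v b) = b"
  by (simp add: unitary_def assoc_mult_mat_vec[symmetric, of _ d d _ d])

lemma unitary_hinner: assumes k: "unitary d k" and a: "a \<in> carrier_vec d" and b: "b \<in> carrier_vec d"
  shows "hinner (k *\<^sub>v a) (k *\<^sub>v b) = hinner a b"
proof -
  have "hinner (k *\<^sub>v a) (k *\<^sub>v b) = hinner a (cadj k *\<^sub>v (k *\<^sub>v b))"
    using unitary_carrier[OF k] a b by (intro hinner_mult_mat_vec) auto
  thus ?thesis using k b by (simp add: unitary_cadj_mult_vec)
qed

lemma unitary_nrm2: "unitary d k \<Longrightarrow> a \<in> carrier_vec d \<Longrightarrow> nrm2 (k *\<^sub>v a) = nrm2 a"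
  unfolding nrm2_def by (simp add: unitary_hinner)

lemma unitary_dP: "unitary d k \<Longrightarrow> a \<in> carrier_vec d \<Longrightarrow> b \<in> carrier_vec d \<Longrightarrow>
    dP (k *\<^sub>v a) (k *\<^sub>v b) = dP a b"
  unfolding dP_def nrm2_def by (simp add: unitary_hinner)

lemma unitary_mult_vec_index: assumes k: "unitary d k" and j: "j < d" and p: "p \<in> carrier_vec d"
  shows "(k *\<^sub>v p) $ j = hinner p (cadj k *\<^sub>v unit_vec d j)"
  using hinner_unit_vec_right[OF j, of "k *\<^sub>v p"] hinner_mult_mat_vec[OF unitary_carrier[OF k] p]
  by simp

lemma nrm2_mult_mat_diag:
  assumes A: "unitary d A" and B: "B \<in> carrier_mat d d" and v: "v \<in> carrier_vec d"
  shows "nrm2 ((A * mat_diag d e * B) *\<^sub>v v) = (\<Sum>i<d. (cmod (e i))\<^sup>2 * (cmod ((B *\<^sub>v v) $ i))\<^sup>2)"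
  using A B v by (simp add: mult_mat_diag_mult_vec unitary_carrier unitary_nrm2 nrm2_sum
      norm_mult power_mult_distrib)

lemma Kfield_zero: "Kfield K \<Longrightarrow> 0 \<in> K" by (auto simp: Kfield_def)

lemma Kfield_one: "Kfield K \<Longrightarrow> 1 \<in> K" by (auto simp: Kfield_def)

lemma Kfield_of_real: "Kfield K \<Longrightarrow> complex_of_real r \<in> K" by (auto simp: Kfield_def)

lemma Kfield_uminus: "Kfield K \<Longrightarrow> a \<in> K \<Longrightarrow> - a \<in> K" by (auto simp: Kfield_def)

lemma Kfield_add: "Kfield K \<Longrightarrow> a \<in> K \<Longrightarrow> b \<in> K \<Longrightarrow> a + b \<in> K" by (auto simp: Kfield_def)

lemma Kfield_mult: "Kfield K \<Longrightarrow> a \<in> K \<Longrightarrow> b \<in> K \<Longrightarrow> a * b \<in> K" by (auto simp: Kfield_def)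

lemma Kfield_divide: "Kfield K \<Longrightarrow> a \<in> K \<Longrightarrow> b \<in> K \<Longrightarrow> a / b \<in> K" by (auto simp: Kfield_def)

lemma Kfield_cnj: "Kfield K \<Longrightarrow> a \<in> K \<Longrightarrow> cnj a \<in> K" by (auto simp: Kfield_def Reals_cnj_iff)

lemma Kfield_sum: "Kfield K \<Longrightarrow> (\<And>i. i \<in> A \<Longrightarrow> f i \<in> K) \<Longrightarrow> sum f A \<in> K"
  by (auto simp: Kfield_def)

lemma Kvec_carrier: "Kvec K d v \<Longrightarrow> v \<in> carrier_vec d"
  by (simp add: Kvec_def)

lemma Kvec_unit_vec: "Kfield K \<Longrightarrow> Kvec K d (unit_vec d j)"
  by (auto simp: Kvec_def unit_vec_def Kfield_zero Kfield_one)

lemma Kmat_mult: assumes K: "Kfield K" and a: "Kmat K d a" and b: "Kmat K d b"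
  shows "Kmat K d (a * b)"
  using a b
  by (auto simp: Kmat_def mult_mat_sum[of _ d d _ d] intro!: Kfield_sum[OF K] Kfield_mult[OF K])

lemma Kmat_mult_vec: assumes K: "Kfield K" and a: "Kmat K d a" and v: "Kvec K d v"
  shows "Kvec K d (a *\<^sub>v v)"
  using a v by (auto simp: Kmat_def Kvec_def mult_mat_vec_sum[of _ d d]
      intro!: Kfield_sum[OF K] Kfield_mult[OF K])

lemma Kmat_cadj: "Kfield K \<Longrightarrow> Kmat K d a \<Longrightarrow> Kmat K d (cadj a)"
  by (auto simp: Kmat_def cadj_index intro!: Kfield_cnj)

lemma hinner_in_K: assumes K: "Kfield K" and u: "Kvec K d u" and v: "Kvec K d v"
  shows "hinner u v \<in> K"
  using u v unfolding hinner_sum[of v d, OF Kvec_carrier[OF v]]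
  by (auto simp: Kvec_def intro!: Kfield_sum[OF K] Kfield_mult[OF K] Kfield_cnj[OF K])

lemma minv_inverse: assumes g: "g \<in> carrier_mat d d" and inv: "invertible_mat g"
  shows "minv d g \<in> carrier_mat d d \<and> g * minv d g = 1\<^sub>m d \<and> minv d g * g = 1\<^sub>m d"
proof -
  obtain B where "inverts_mat g B" "inverts_mat B g" using inv by (auto simp: invertible_mat_def)
  hence 1: "g * B = 1\<^sub>m d" and 2: "B * g = 1\<^sub>m (dim_row B)" using g by (auto simp: inverts_mat_def)
  have "B \<in> carrier_mat d d"
    using arg_cong[OF 1, of dim_col] arg_cong[OF 2, of dim_col] g by auto
  hence "\<exists>h. h \<in> carrier_mat d d \<and> g * h = 1\<^sub>m d \<and> h * g = 1\<^sub>m d" using 1 2 by auto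
  thus ?thesis unfolding minv_def by (rule someI_ex)
qed

text \<open>Over the reals the inverse stays real because its entrywise conjugate is again an inverse.\<close>
lemma Kmat_minv: assumes K: "Kfield K" and g: "Kmat K d g" and inv: "invertible_mat g"
  shows "Kmat K d (minv d g)"
proof -
  have gc: "g \<in> carrier_mat d d" using g by (simp add: Kmat_def)
  define h where "h = minv d g"
  have hc: "h \<in> carrier_mat d d" and gh: "g * h = 1\<^sub>m d" and hg: "h * g = 1\<^sub>m d"
    using minv_inverse[OF gc inv] by (auto simp: h_def)
  show ?thesis
  proof (cases "K = UNIV")
    case True thus ?thesis using hc by (simp add: Kmat_def h_def[symmetric])
  next
    case False
    hence KR: "K = \<real>" using K by (simp add: Kfield_def)
    define h' where "h' = Matrix.mat d d (\<lambda>(i,j). cnj (h $$ (i,j)))"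
    have h'c: "h' \<in> carrier_mat d d" by (simp add: h'_def)
    have "g * h' = 1\<^sub>m d"
    proof (rule eq_matI)
      fix i j assume "i < dim_row (1\<^sub>m d :: complex mat)" "j < dim_col (1\<^sub>m d :: complex mat)"
      hence i: "i < d" and j: "j < d" by auto
      have gr: "\<And>k. k < d \<Longrightarrow> cnj (g $$ (i,k)) = g $$ (i,k)"
        using g i KR by (auto simp: Kmat_def Reals_cnj_iff)
      have "(g * h') $$ (i,j) = (\<Sum>k<d. g $$ (i,k) * cnj (h $$ (k,j)))"
        using i j by (subst mult_mat_sum[OF gc h'c i j]) (auto simp: h'_def)
      also have "\<dots> = cnj (\<Sum>k<d. g $$ (i,k) * h $$ (k,j))"
        using gr by (auto intro!: sum.cong)
      also have "\<dots> = 1\<^sub>m d $$ (i,j)" using i j gh by (simp add: mult_mat_sum[OF gc hc, symmetric])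
      finally show "(g * h') $$ (i,j) = 1\<^sub>m d $$ (i,j)" .
    qed (use gc h'c in auto)
    hence "h' = h" using left_inverse_eq_right_inverse[OF gc h'c hc] hg by simp
    hence "\<And>i j. i < d \<Longrightarrow> j < d \<Longrightarrow> cnj (h $$ (i,j)) = h $$ (i,j)"
      unfolding h'_def by (metis case_prod_conv index_mat(1))
    thus ?thesis using hc KR by (auto simp: Kmat_def h_def[symmetric] Reals_cnj_iff)
  qed
qed

lemma invertible_mat_mult: fixes A B :: "complex mat"
  assumes A: "A \<in> carrier_mat d d" and B: "B \<in> carrier_mat d d"
    and iA: "invertible_mat A" and iB: "invertible_mat B"
  shows "invertible_mat (A * B)"
proof -
  note a = minv_inverse[OF A iA] and b = minv_inverse[OF B iB]
  define X where "X = minv d B * minv d A"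
  have ma: "minv d A \<in> carrier_mat d d" and mb: "minv d B \<in> carrier_mat d d" using a b by auto
  have Xc: "X \<in> carrier_mat d d" using ma mb X_def by auto
  have "A * B * X = A * (B * minv d B) * minv d A"
    using A B ma mb by (simp add: X_def assoc_mult_mat[of _ d d _ d _ d])
  hence 1: "A * B * X = 1\<^sub>m d" using a b A by (simp add: right_mult_one_mat)
  have "X * (A * B) = minv d B * (minv d A * A) * B"
    using A B ma mb by (simp add: X_def assoc_mult_mat[of _ d d _ d _ d])
  hence 2: "X * (A * B) = 1\<^sub>m d" using a b B right_mult_one_mat[of "minv d B" d d] by auto
  show ?thesis unfolding invertible_mat_def inverts_mat_def using 1 2 A B Xc
    by (intro conjI exI[of _ X]) (auto simp: square_mat.simps)
qed

lemma foldr_mult_GLK: assumes "set L \<subseteq> GLK K d"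
  shows "foldr (*) L (1\<^sub>m d) \<in> carrier_mat d d \<and> invertible_mat (foldr (*) L (1\<^sub>m d))"
  using assms
proof (induction L)
  case Nil
  have "invertible_mat (1\<^sub>m d :: complex mat)"
    unfolding invertible_mat_def inverts_mat_def
    by (intro conjI exI[of _ "1\<^sub>m d"]) (auto simp: square_mat.simps)
  thus ?case by simp
next
  case (Cons a L)
  hence "a \<in> carrier_mat d d" "invertible_mat a" by (auto simp: GLK_def Kmat_def)
  thus ?case using Cons invertible_mat_mult by auto
qed

section \<open>Hyperplanes\<close>

lemma hyp_PK_nonempty: assumes K: "Kfield K" and d: "2 \<le> d" and u: "u \<in> PK K d"
  obtains q where "q \<in> PK K d" "q \<in> hyp K d u"
proof -
  have uc: "u \<in> carrier_vec d" and uK: "Kvec K d u" using u by (auto simp: PK_def Kvec_def)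
  define q where "q = (if u $ 0 = 0 \<and> u $ 1 = 0 then unit_vec d 0
    else vec d (\<lambda>i. if i = 0 then cnj (u $ 1) else if i = 1 then - cnj (u $ 0) else 0))"
  have qc: "q \<in> carrier_vec d" by (simp add: q_def)
  have "hinner q u = (\<Sum>i\<in>{0,1} \<union> {2..<d}. q $ i * cnj (u $ i))"
    unfolding hinner_sum[OF uc] using d by (intro sum.cong) auto
  also have "\<dots> = q $ 0 * cnj (u $ 0) + q $ 1 * cnj (u $ 1)"
    using d by (subst sum.union_disjoint) (auto simp: q_def)
  also have "\<dots> = 0" using d by (auto simp: q_def)
  finally have "hinner q u = 0" .
  moreover have "Kvec K d q"
    using K uK d
    by (auto simp: q_def Kvec_def intro!: Kfield_cnj Kfield_uminus Kfield_zero Kfield_one)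
  moreover have "q \<noteq> 0\<^sub>v d"
  proof
    assume "q = 0\<^sub>v d"
    hence "q $ 0 = 0" "q $ 1 = 0" using d by auto
    thus False using d by (auto simp: q_def split: if_splits)
  qed
  ultimately show ?thesis using that by (auto simp: PK_def hyp_def)
qed

lemma hyp_dP_lower_bound_le_1:
  assumes K: "Kfield K" and d: "2 \<le> d" and p: "p \<in> carrier_vec d" and u: "u \<in> PK K d"
    and bound: "\<forall>q\<in>PK K d \<inter> hyp K d u. \<epsilon> \<le> dP p q"
  shows "\<epsilon> \<le> 1"
proof -
  obtain q where "q \<in> PK K d" "q \<in> hyp K d u" using hyp_PK_nonempty[OF K d u] .
  thus ?thesis using bound dP_le_1[OF p] PK_carrier by (meson IntI order_trans)
qed

lemma image_hyp_minv: assumes K: "Kfield K" and \<gamma>: "\<gamma> \<in> GLK K d" and u: "u \<in> carrier_vec d"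
  shows "(\<lambda>x. minv d \<gamma> *\<^sub>v x) ` hyp K d u = hyp K d (cadj \<gamma> *\<^sub>v u)"
proof (intro equalityI subsetI)
  have \<gamma>K: "Kmat K d \<gamma>" and \<gamma>i: "invertible_mat \<gamma>" using \<gamma> by (auto simp: GLK_def)
  have \<gamma>c: "\<gamma> \<in> carrier_mat d d" using \<gamma>K by (simp add: Kmat_def)
  note inv = minv_inverse[OF \<gamma>c \<gamma>i]
  have adj: "hinner z (cadj \<gamma> *\<^sub>v u) = hinner (\<gamma> *\<^sub>v z) u" if "z \<in> carrier_vec d" for z
    using hinner_mult_mat_vec[OF \<gamma>c that u] by simp
  {
    fix z assume "z \<in> (\<lambda>x. minv d \<gamma> *\<^sub>v x) ` hyp K d u"
    then obtain x where x: "Kvec K d x" "hinner x u = 0" and z: "z = minv d \<gamma> *\<^sub>v x"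
      by (auto simp: hyp_def)
    have xc: "x \<in> carrier_vec d" using x(1) by (simp add: Kvec_def)
    have "\<gamma> *\<^sub>v z = x" using inv xc \<gamma>c by (simp add: z assoc_mult_mat_vec[symmetric, of _ d d _ d])
    moreover have "Kvec K d z" unfolding z using Kmat_mult_vec[OF K Kmat_minv[OF K \<gamma>K \<gamma>i] x(1)] .
    ultimately show "z \<in> hyp K d (cadj \<gamma> *\<^sub>v u)" using adj x by (simp add: hyp_def Kvec_def)
  next
    fix z assume "z \<in> hyp K d (cadj \<gamma> *\<^sub>v u)"
    hence zK: "Kvec K d z" and z0: "hinner z (cadj \<gamma> *\<^sub>v u) = 0" by (auto simp: hyp_def)
    have zc: "z \<in> carrier_vec d" using zK by (simp add: Kvec_def)
    have "\<gamma> *\<^sub>v z \<in> hyp K d u" using adj[OF zc] z0 Kmat_mult_vec[OF K \<gamma>K zK] by (simp add: hyp_def)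
    moreover have "z = minv d \<gamma> *\<^sub>v (\<gamma> *\<^sub>v z)"
      using inv zc \<gamma>c by (simp add: assoc_mult_mat_vec[symmetric, of _ d d _ d])
    ultimately show "z \<in> (\<lambda>x. minv d \<gamma> *\<^sub>v x) ` hyp K d u" by blast
  }
qed

lemma cadj_mult_vec_in_actH: assumes K: "Kfield K" and \<gamma>: "\<gamma> \<in> GLK K d" and u: "u \<in> PK K d"
  shows "cadj \<gamma> *\<^sub>v u \<in> actH K d (minv d \<gamma>) {u}"
proof -
  have \<gamma>K: "Kmat K d \<gamma>" and \<gamma>i: "invertible_mat \<gamma>" using \<gamma> by (auto simp: GLK_def)
  have \<gamma>c: "\<gamma> \<in> carrier_mat d d" using \<gamma>K by (simp add: Kmat_def)
  have uc: "u \<in> carrier_vec d" and u0: "u \<noteq> 0\<^sub>v d" and uK: "Kvec K d u"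
    using u by (auto simp: PK_def Kvec_def)
  note inv = minv_inverse[OF \<gamma>c \<gamma>i]
  have "cadj (minv d \<gamma>) * cadj \<gamma> = 1\<^sub>m d" using inv \<gamma>c cadj_mult[of \<gamma> d d "minv d \<gamma>" d] by simp
  hence "u = cadj (minv d \<gamma>) *\<^sub>v (cadj \<gamma> *\<^sub>v u)"
    using inv \<gamma>c uc by (simp add: assoc_mult_mat_vec[symmetric, of _ d d _ d])
  hence "cadj \<gamma> *\<^sub>v u \<noteq> 0\<^sub>v d" using u0 inv mult_mat_vec_zero[of "cadj (minv d \<gamma>)" d d] by auto
  moreover have "Kvec K d (cadj \<gamma> *\<^sub>v u)" using Kmat_mult_vec[OF K Kmat_cadj[OF K \<gamma>K] uK] .
  ultimately show ?thesis using image_hyp_minv[OF K \<gamma> uc] by (auto simp: actH_def PK_def)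
qed

lemma mult_mat_vec_unit_vec_in_spanFirst:
  assumes K: "Kfield K" and k: "k \<in> carrier_mat d d" and j: "j < d - 1"
  shows "k *\<^sub>v unit_vec d j \<in> spanFirst K d k"
proof -
  have "k *\<^sub>v unit_vec d j = vec d (\<lambda>i. \<Sum>l<d-1. (if l = j then 1 else 0) * k $$ (i,l))"
  proof (rule eq_vecI)
    fix i assume "i < dim_vec (vec d (\<lambda>i. \<Sum>l<d-1. (if l = j then 1 else 0) * k $$ (i,l)))"
    hence i: "i < d" by simp
    have "(\<Sum>l<d-1. (if l = j then 1 else 0) * k $$ (i,l)) = (\<Sum>l<d-1. if l = j then k $$ (i,j) else 0)"
      by (intro sum.cong) auto
    thus "(k *\<^sub>v unit_vec d j) $ i = vec d (\<lambda>i. \<Sum>l<d-1. (if l = j then 1 else 0) * k $$ (i,l)) $ i"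
      using mult_mat_vec_unit_vec[OF k i] i j by simp
  qed (use k in simp)
  moreover have "\<forall>l<d-1. (if l = j then 1 else 0) \<in> K" using K by (auto simp: Kfield_zero Kfield_one)
  ultimately show ?thesis
    unfolding spanFirst_def mem_Collect_eq by (intro exI[of _ "\<lambda>l. if l = j then 1 else 0"] conjI)
qed

text \<open>The first \<open>d - 1\<close> columns of \<open>k\<close> lie in the hyperplane, so \<open>k\<^sup>* w\<close> is supported on
  the last coordinate.\<close>
lemma normal_of_hyp_eq_spanFirst:
  assumes K: "Kfield K" and d: "0 < d" and k: "unitary d k"
    and w: "w \<in> PK K d" and hw: "hyp K d w = spanFirst K d k"
  obtains c where "c \<noteq> 0" "w = c \<cdot>\<^sub>v (k *\<^sub>v unit_vec d (d - 1))"
proof -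
  have kc: "k \<in> carrier_mat d d" using unitary_carrier[OF k] .
  have wc: "w \<in> carrier_vec d" and w0: "w \<noteq> 0\<^sub>v d" using w by (auto simp: PK_def Kvec_def)
  define r where "r = cadj k *\<^sub>v w"
  have rc: "r \<in> carrier_vec d" using kc wc by (simp add: r_def)
  have r0: "r $ j = 0" if j: "j < d - 1" for j
  proof -
    have "hinner (k *\<^sub>v unit_vec d j) w = 0"
      using mult_mat_vec_unit_vec_in_spanFirst[OF K kc j] hw by (auto simp: hyp_def)
    moreover have "r $ j = hinner w (k *\<^sub>v unit_vec d j)"
      using hinner_mult_mat_vec[OF cadj_carrier[OF kc] wc unit_vec_carrier, of j] cadj_cadj[OF kc] j
      by (simp add: r_def hinner_unit_vec_right)
    ultimately show "r $ j = 0" using hinner_cnj_commute[OF wc, of "k *\<^sub>v unit_vec d j"] kc by simp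
  qed
  have "r = (r $ (d - 1)) \<cdot>\<^sub>v unit_vec d (d - 1)"
  proof (rule eq_vecI)
    fix i assume "i < dim_vec ((r $ (d - 1)) \<cdot>\<^sub>v unit_vec d (d - 1))"
    thus "r $ i = ((r $ (d - 1)) \<cdot>\<^sub>v unit_vec d (d - 1)) $ i" using r0[of i] by (cases "i = d - 1") auto
  qed (use rc in simp)
  hence weq: "w = (r $ (d - 1)) \<cdot>\<^sub>v (k *\<^sub>v unit_vec d (d - 1))"
    using unitary_mult_cadj_vec[OF k wc] mult_mat_vec[OF kc unit_vec_carrier] by (metis r_def)
  moreover have "r $ (d - 1) \<noteq> 0" using weq w0 kc by auto
  ultimately show ?thesis using that by blast
qed

section \<open>Reduced words and ping-pong\<close>

lemma foldr_mult_carrier: "set L \<subseteq> carrier_mat d d \<Longrightarrow> foldr (*) L (1\<^sub>m d) \<in> carrier_mat d d"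
  by (induction L) auto

lemma reduced_tl: assumes r: "reduced d \<Gamma> (\<gamma> # R)" and R: "R \<noteq> []"
  shows "reduced d \<Gamma> R" "\<forall>j\<in>{1,2}. \<not> (\<gamma> \<in> \<Gamma> j \<and> hd R \<in> \<Gamma> j)"
proof -
  have r1: "\<And>k. k < length (\<gamma> # R) \<Longrightarrow> (\<gamma> # R) ! k \<in> (\<Gamma> 1 \<union> \<Gamma> 2) - {1\<^sub>m d}"
    and r2: "\<And>k j. k + 1 < length (\<gamma> # R) \<Longrightarrow> j \<in> {1,2} \<Longrightarrow>
      \<not> ((\<gamma> # R) ! k \<in> \<Gamma> j \<and> (\<gamma> # R) ! (k+1) \<in> \<Gamma> j)"
    using r unfolding reduced_def by blast+
  show "reduced d \<Gamma> R" unfolding reduced_def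
  proof (intro conjI allI impI ballI)
    fix k assume "k < length R"
    from r1[of "Suc k"] this show "R ! k \<in> \<Gamma> 1 \<union> \<Gamma> 2 - {1\<^sub>m d}" by simp
  next
    fix k j assume "k + 1 < length R" and "j \<in> {1::nat,2}"
    from r2[of "Suc k" j] this show "\<not> (R ! k \<in> \<Gamma> j \<and> R ! (k + 1) \<in> \<Gamma> j)" by simp
  qed fact
  show "\<forall>j\<in>{1,2}. \<not> (\<gamma> \<in> \<Gamma> j \<and> hd R \<in> \<Gamma> j)" using r2[of 0] R by (cases R) auto
qed

lemma reduced_mem: assumes "reduced d \<Gamma> L" "x \<in> set L" shows "x \<in> \<Gamma> 1 \<union> \<Gamma> 2 - {1\<^sub>m d}"
  using assms unfolding reduced_def in_set_conv_nth by blast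

lemma reduced_hd: "reduced d \<Gamma> L \<Longrightarrow> hd L \<in> \<Gamma> 1 \<union> \<Gamma> 2 - {1\<^sub>m d}"
  using reduced_mem[of d \<Gamma> L "hd L"] by (simp add: reduced_def)

lemma reduced_set_GLK: "reduced d \<Gamma> gs \<Longrightarrow> \<forall>i\<in>{1,2}. \<Gamma> i \<subseteq> GLK K d \<Longrightarrow> set gs \<subseteq> GLK K d"
  using reduced_mem by fastforce

lemma other_index_exists: assumes "\<gamma> \<in> \<Gamma> 1 \<union> \<Gamma> 2"
  obtains b c :: nat where "b \<in> {1,2}" "c \<in> {1,2}" "b \<noteq> c" "\<gamma> \<in> \<Gamma> c"
  using assms that[of 2 1] that[of 1 2] by auto

lemma reduced_next_letter:
  assumes r: "reduced d \<Gamma> (\<gamma> # R)" and R: "R \<noteq> []" and a: "a \<in> {1,2}" and \<gamma>: "\<gamma> \<in> \<Gamma> a"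
  obtains c where "c \<in> {1,2}" "c \<noteq> a" "hd R \<in> \<Gamma> c" "\<forall>j\<in>{1,2}. hd R \<in> \<Gamma> j \<longrightarrow> j = c"
proof -
  have "hd R \<in> \<Gamma> 1 \<union> \<Gamma> 2" using reduced_hd[OF reduced_tl(1)[OF r R]] by auto
  moreover have "hd R \<notin> \<Gamma> a" using reduced_tl(2)[OF r R] a \<gamma> by auto
  ultimately show ?thesis using that a by fastforce
qed

lemma pingpongD: "pingpong K d \<Gamma> U V \<Longrightarrow> i \<in> {1,2} \<Longrightarrow> j \<in> {1,2} \<Longrightarrow> i \<noteq> j \<Longrightarrow> \<gamma> \<in> \<Gamma> i - {1\<^sub>m d} \<Longrightarrow>
   actP \<gamma> (closP K d (U j)) \<subseteq> U i \<and> actH K d (minv d \<gamma>) (closP K d (V j)) \<subseteq> V i"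
  unfolding pingpong_def by blast

lemma pingpong_word_mult_vec:
  assumes pp: "pingpong K d \<Gamma> U V" and pU: "\<forall>i\<in>{1,2}. projset K d (U i)"
    and sub: "\<forall>i\<in>{1,2}. \<Gamma> i \<subseteq> carrier_mat d d"
  shows "reduced d \<Gamma> L \<Longrightarrow> a \<in> {1,2} \<Longrightarrow> hd L \<in> \<Gamma> a \<Longrightarrow> (\<forall>j\<in>{1,2}. hd L \<in> \<Gamma> j \<longrightarrow> j = a) \<Longrightarrow>
    b \<in> {1,2} \<Longrightarrow> c \<in> {1,2} \<Longrightarrow> b \<noteq> c \<Longrightarrow> last L \<in> \<Gamma> c \<Longrightarrow> p \<in> closP K d (U b) \<Longrightarrow>
    foldr (*) L (1\<^sub>m d) *\<^sub>v p \<in> U a"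
proof (induction L arbitrary: a)
  case Nil thus ?case by (simp add: reduced_def)
next
  case (Cons \<gamma> R)
  have \<gamma>: "\<gamma> \<in> \<Gamma> a - {1\<^sub>m d}" using Cons.prems(3) reduced_hd[OF Cons.prems(1)] by simp
  have \<gamma>c: "\<gamma> \<in> carrier_mat d d" using Cons.prems(2) \<gamma> sub by auto
  have pc: "p \<in> carrier_vec d" using Cons.prems(9) PK_carrier by (auto simp: closP_def)
  show ?case
  proof (cases "R = []")
    case True
    hence "a \<noteq> b" using Cons.prems(3-8) by auto
    hence "\<gamma> *\<^sub>v p \<in> U a"
      using pingpongD[OF pp Cons.prems(2,5) _ \<gamma>] Cons.prems(9) by (auto simp: actP_def)
    thus ?thesis using True \<gamma>c by (simp add: right_mult_one_mat)
  next
    case False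
    obtain c' where c': "c' \<in> {1,2}" "c' \<noteq> a" "hd R \<in> \<Gamma> c'" "\<forall>j\<in>{1,2}. hd R \<in> \<Gamma> j \<longrightarrow> j = c'"
      using reduced_next_letter[OF Cons.prems(1) False Cons.prems(2)] \<gamma> by blast
    have "foldr (*) R (1\<^sub>m d) *\<^sub>v p \<in> U c'"
      using Cons.IH[OF reduced_tl(1)[OF Cons.prems(1) False] c'(1,3,4) Cons.prems(5-7)]
        Cons.prems(8,9) False by simp
    hence "foldr (*) R (1\<^sub>m d) *\<^sub>v p \<in> closP K d (U c')" using projset_subset_closP pU c'(1) by blast
    hence "\<gamma> *\<^sub>v (foldr (*) R (1\<^sub>m d) *\<^sub>v p) \<in> U a"
      using pingpongD[OF pp Cons.prems(2) c'(1) c'(2)[symmetric] \<gamma>] by (auto simp: actP_def)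
    moreover have "foldr (*) R (1\<^sub>m d) \<in> carrier_mat d d"
      using reduced_mem[OF Cons.prems(1)] sub by (intro foldr_mult_carrier) auto
    ultimately show ?thesis using \<gamma>c pc by (simp add: assoc_mult_mat_vec)
  qed
qed

lemma pingpong_word_cadj_mult_vec:
  assumes K: "Kfield K" and pp: "pingpong K d \<Gamma> U V" and pV: "\<forall>i\<in>{1,2}. projset K d (V i)"
    and GL: "\<forall>i\<in>{1,2}. \<Gamma> i \<subseteq> GLK K d"
  shows "reduced d \<Gamma> L \<Longrightarrow> a \<in> {1,2} \<Longrightarrow> hd L \<in> \<Gamma> a \<Longrightarrow> b \<in> {1,2} \<Longrightarrow> b \<noteq> a \<Longrightarrow>
    i \<in> {1,2} \<Longrightarrow> last L \<in> \<Gamma> i \<Longrightarrow> (\<forall>j\<in>{1,2}. last L \<in> \<Gamma> j \<longrightarrow> j = i) \<Longrightarrow>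
    u \<in> closP K d (V b) \<Longrightarrow> cadj (foldr (*) L (1\<^sub>m d)) *\<^sub>v u \<in> V i"
proof (induction L arbitrary: a b u)
  case Nil thus ?case by (simp add: reduced_def)
next
  case (Cons \<gamma> R)
  have \<gamma>: "\<gamma> \<in> \<Gamma> a - {1\<^sub>m d}" using Cons.prems(3) reduced_hd[OF Cons.prems(1)] by simp
  have \<gamma>G: "\<gamma> \<in> GLK K d" using Cons.prems(2) \<gamma> GL by auto
  have \<gamma>c: "\<gamma> \<in> carrier_mat d d" using \<gamma>G by (simp add: GLK_def Kmat_def)
  have uP: "u \<in> PK K d" using Cons.prems(9) by (simp add: closP_def)
  have "actH K d (minv d \<gamma>) {u} \<subseteq> V a"
    using pingpongD[OF pp Cons.prems(2,4) _ \<gamma>] Cons.prems(5,9) by (auto simp: actH_def)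
  hence step: "cadj \<gamma> *\<^sub>v u \<in> V a" using cadj_mult_vec_in_actH[OF K \<gamma>G uP] by blast
  show ?case
  proof (cases "R = []")
    case True
    hence "i = a" using Cons.prems(2,3,7,8) by auto
    thus ?thesis using True step \<gamma>c by (simp add: right_mult_one_mat)
  next
    case False
    obtain c where c: "c \<in> {1,2}" "c \<noteq> a" "hd R \<in> \<Gamma> c"
      using reduced_next_letter[OF Cons.prems(1) False Cons.prems(2)] \<gamma> by blast
    have "cadj \<gamma> *\<^sub>v u \<in> closP K d (V a)" using step projset_subset_closP pV Cons.prems(2) by blast
    hence IH: "cadj (foldr (*) R (1\<^sub>m d)) *\<^sub>v (cadj \<gamma> *\<^sub>v u) \<in> V i"
      using Cons.IH[OF reduced_tl(1)[OF Cons.prems(1) False] c(1,3) Cons.prems(2) c(2)[symmetric]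
          Cons.prems(6)] Cons.prems(7,8) False by simp
    have "foldr (*) R (1\<^sub>m d) \<in> carrier_mat d d"
      using reduced_mem[OF Cons.prems(1)] GL by (intro foldr_mult_carrier) (auto simp: GLK_def Kmat_def)
    thus ?thesis using IH \<gamma>c PK_carrier[OF uP]
      by (simp add: cadj_mult assoc_mult_mat_vec[of _ d d _ d])
  qed
qed

section \<open>Singular values\<close>

lemma cartan_unitary: "cartan K d g k \<sigma> k' \<Longrightarrow> unitary d k \<and> unitary d k'"
  by (auto simp: cartan_def unitaryK_imp_unitary)

lemma cartan_nrm2_mult_vec: assumes C: "cartan K d g k \<sigma> k'" and v: "v \<in> carrier_vec d"
  shows "nrm2 (g *\<^sub>v v) = (\<Sum>i<d. (\<sigma> i)\<^sup>2 * (cmod ((k' *\<^sub>v v) $ i))\<^sup>2)"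
proof -
  have "unitary d k" "unitary d k'" using cartan_unitary[OF C] by auto
  moreover have "g = k * mat_diag d (\<lambda>i. complex_of_real (\<sigma> i)) * k'" using C by (simp add: cartan_def)
  ultimately show ?thesis by (simp add: nrm2_mult_mat_diag[OF _ unitary_carrier v])
qed

lemma cartan_nrm2_le:
  assumes C: "cartan K d g k \<sigma> k'" and m: "m < d" and v: "v \<in> carrier_vec d"
    and v0: "\<forall>i<m. (k' *\<^sub>v v) $ i = 0"
  shows "nrm2 (g *\<^sub>v v) \<le> (\<sigma> m)\<^sup>2 * nrm2 v"
proof -
  have k': "unitary d k'" using cartan_unitary[OF C] by simp
  have "nrm2 (g *\<^sub>v v) \<le> (\<Sum>i<d. (\<sigma> m)\<^sup>2 * (cmod ((k' *\<^sub>v v) $ i))\<^sup>2)"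
    unfolding cartan_nrm2_mult_vec[OF C v]
  proof (rule sum_mono)
    fix i assume i: "i \<in> {..<d}"
    show "(\<sigma> i)\<^sup>2 * (cmod ((k' *\<^sub>v v) $ i))\<^sup>2 \<le> (\<sigma> m)\<^sup>2 * (cmod ((k' *\<^sub>v v) $ i))\<^sup>2"
    proof (cases "i < m")
      case False
      hence "0 \<le> \<sigma> i" "\<sigma> i \<le> \<sigma> m" using C i by (auto simp: cartan_def)
      thus ?thesis by (intro mult_right_mono power_mono) auto
    qed (use v0 in simp)
  qed
  also have "\<dots> = (\<sigma> m)\<^sup>2 * nrm2 (k' *\<^sub>v v)"
    using unitary_carrier[OF k'] v by (simp add: nrm2_sum[of _ d] sum_distrib_left)
  also have "\<dots> = (\<sigma> m)\<^sup>2 * nrm2 v" using unitary_nrm2[OF k' v] by simp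
  finally show ?thesis .
qed

lemma cartan_nrm2_ge:
  assumes C: "cartan K d g k \<sigma> k'" and m: "m < d" and z: "z \<in> carrier_vec d"
    and z0: "\<forall>i. m < i \<longrightarrow> i < d \<longrightarrow> z $ i = 0"
  shows "(\<sigma> m)\<^sup>2 * nrm2 z \<le> nrm2 (g *\<^sub>v (cadj k' *\<^sub>v z))"
proof -
  have k': "unitary d k'" using cartan_unitary[OF C] by simp
  have "(\<sigma> m)\<^sup>2 * nrm2 z = (\<Sum>i<d. (\<sigma> m)\<^sup>2 * (cmod (z $ i))\<^sup>2)"
    using z by (simp add: nrm2_sum[of _ d] sum_distrib_left)
  also have "\<dots> \<le> (\<Sum>i<d. (\<sigma> i)\<^sup>2 * (cmod (z $ i))\<^sup>2)"
  proof (rule sum_mono)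
    fix i assume i: "i \<in> {..<d}"
    show "(\<sigma> m)\<^sup>2 * (cmod (z $ i))\<^sup>2 \<le> (\<sigma> i)\<^sup>2 * (cmod (z $ i))\<^sup>2"
    proof (cases "i \<le> m")
      case True
      hence "0 \<le> \<sigma> m" "\<sigma> m \<le> \<sigma> i" using C i m by (auto simp: cartan_def)
      thus ?thesis by (intro mult_right_mono power_mono) auto
    qed (use z0 i in auto)
  qed
  also have "\<dots> = nrm2 (g *\<^sub>v (cadj k' *\<^sub>v z))"
    using cartan_nrm2_mult_vec[OF C cadj_mult_vec_carrier[OF unitary_carrier[OF k'] z]]
    by (simp add: unitary_mult_cadj_vec[OF k' z])
  finally show ?thesis .
qed

lemma exists_vec_span01_row0_zero:
  fixes M :: "complex mat" assumes M: "M \<in> carrier_mat d d" and d: "1 < d"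
  obtains z where "z \<in> carrier_vec d" "z \<noteq> 0\<^sub>v d" "\<forall>i. 1 < i \<longrightarrow> i < d \<longrightarrow> z $ i = 0"
    "(M *\<^sub>v z) $ 0 = 0"
proof -
  define c0 where "c0 = (if M $$ (0,0) = 0 \<and> M $$ (0,1) = 0 then 1 else M $$ (0,1))"
  define c1 where "c1 = (if M $$ (0,0) = 0 \<and> M $$ (0,1) = 0 then 0 else - M $$ (0,0))"
  define z where "z = vec d (\<lambda>i. if i = 0 then c0 else if i = 1 then c1 else 0)"
  have "(M *\<^sub>v z) $ 0 = (\<Sum>j<d. M $$ (0,j) * z $ j)"
    using mult_mat_vec_sum[OF M _ ] d by (simp add: z_def)
  also have "\<dots> = (\<Sum>j\<in>{0,1} \<union> {2..<d}. M $$ (0,j) * z $ j)"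
    using d by (intro sum.cong) auto
  also have "\<dots> = M $$ (0,0) * c0 + M $$ (0,1) * c1"
    using d by (subst sum.union_disjoint) (auto simp: z_def)
  also have "\<dots> = 0" by (simp add: c0_def c1_def)
  finally have "(M *\<^sub>v z) $ 0 = 0" .
  moreover have "z \<noteq> 0\<^sub>v d"
  proof
    assume "z = 0\<^sub>v d"
    hence "z $ 0 = 0" "z $ 1 = 0" using d by auto
    thus False using d by (auto simp: z_def c0_def c1_def split: if_splits)
  qed
  ultimately show ?thesis using that[of z] by (simp add: z_def)
qed

text \<open>Min-max argument: test with a nonzero vector spanned by the first \<open>m + 1\<close> right singular
  vectors of one decomposition and orthogonal to the first \<open>m\<close> of the other.\<close>
lemma cartan_singular_value_le:
  assumes C: "cartan K d g k \<sigma> k'" and C': "cartan K' d g l \<tau> l'" and m: "m \<le> 1" "m < d"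
  shows "\<sigma> m \<le> \<tau> m"
proof -
  have k': "unitary d k'" and l': "unitary d l'" using cartan_unitary C C' by auto
  have k'c: "cadj k' \<in> carrier_mat d d" and l'c: "l' \<in> carrier_mat d d"
    using unitary_carrier k' l' by auto
  obtain z where z: "z \<in> carrier_vec d" "z \<noteq> 0\<^sub>v d" "\<forall>i. m < i \<longrightarrow> i < d \<longrightarrow> z $ i = 0"
    "\<forall>i<m. ((l' * cadj k') *\<^sub>v z) $ i = 0"
  proof (cases "m = 0")
    case True
    thus ?thesis using that[of "unit_vec d 0"] m by auto
  next
    case False
    hence "m = 1" using m by simp
    thus ?thesis using exists_vec_span01_row0_zero[OF mult_carrier_mat[OF l'c k'c]] m that by auto
  qed
  define v where "v = cadj k' *\<^sub>v z"
  have v: "v \<in> carrier_vec d" using k'c z(1) by (simp add: v_def)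
  have "(\<sigma> m)\<^sup>2 * nrm2 z \<le> nrm2 (g *\<^sub>v v)" unfolding v_def by (rule cartan_nrm2_ge[OF C m(2) z(1,3)])
  also have "\<dots> \<le> (\<tau> m)\<^sup>2 * nrm2 v"
    using z(4) l'c k'c z(1) by (intro cartan_nrm2_le[OF C' m(2) v]) (simp add: v_def assoc_mult_mat_vec)
  also have "nrm2 v = nrm2 z" unfolding v_def using unitary_nrm2[OF unitary_cadj[OF k'] z(1)] .
  finally have "(\<sigma> m)\<^sup>2 \<le> (\<tau> m)\<^sup>2" using nrm2_pos[OF z(1,2)] by simp
  moreover have "0 \<le> \<tau> m" using C' m by (auto simp: cartan_def)
  ultimately show ?thesis by (simp add: power2_le_iff_abs_le)
qed

lemma cartan_eq_sv: assumes C: "cartan K d g k \<sigma> k'" and d: "1 < d"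
  shows "\<sigma> 0 = sv K d g 0 \<and> \<sigma> 1 = sv K d g 1"
proof -
  have "\<exists>\<sigma> k k'. cartan K d g k \<sigma> k'" using C by blast
  hence "\<exists>k k'. cartan K d g k (sv K d g) k'" unfolding sv_def by (rule someI_ex)
  then obtain l l' where C': "cartan K d g l (sv K d g) l'" by blast
  show ?thesis
    using cartan_singular_value_le[OF C C', of 0] cartan_singular_value_le[OF C' C, of 0]
      cartan_singular_value_le[OF C C', of 1] cartan_singular_value_le[OF C' C, of 1] d
    by auto
qed

lemma sv_gap_of_ratio:
  assumes C: "cartan K d g k \<sigma> k'" and d: "1 < d" and \<epsilon>: "0 < \<epsilon>" and \<theta>: "0 < \<theta>"
    and r: "\<not> (sv K d g 0 / sv K d g 1 < max (16 / (\<epsilon> * \<theta>)) X)"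
  shows "sv K d g 1 \<le> \<epsilon> * \<theta> / 16 * sv K d g 0"
proof -
  have t1: "0 \<le> sv K d g 1" using cartan_eq_sv[OF C d] C d by (auto simp: cartan_def)
  have M: "16 / (\<epsilon> * \<theta>) \<le> sv K d g 0 / sv K d g 1" using r by simp
  moreover have "0 < 16 / (\<epsilon> * \<theta>)" using \<epsilon> \<theta> by simp
  ultimately have "0 < sv K d g 1" using t1 by (cases "sv K d g 1 = 0") auto
  thus ?thesis using M \<epsilon> \<theta> by (simp add: field_simps)
qed

lemma cartan_inverse_pos:
  assumes C: "cartan K d h k \<sigma> k'" and g: "g \<in> carrier_mat d d" and gh: "g * h = 1\<^sub>m d" and i: "i < d"
  shows "0 < \<sigma> i"
proof (rule ccontr)
  assume "\<not> 0 < \<sigma> i"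
  hence \<sigma>i: "\<sigma> i = 0" using C i by (auto simp: cartan_def intro: antisym)
  have k': "unitary d k'" using cartan_unitary[OF C] by simp
  have hc: "h \<in> carrier_mat d d"
    using C cartan_unitary[OF C] by (simp add: cartan_def unitary_carrier mult_carrier_mat)
  define v where "v = cadj k' *\<^sub>v unit_vec d i"
  have vc: "v \<in> carrier_vec d" using unitary_carrier[OF k'] by (simp add: v_def)
  have "nrm2 (h *\<^sub>v v) = (\<Sum>j<d. (\<sigma> j)\<^sup>2 * (cmod (unit_vec d i $ j))\<^sup>2)"
    using cartan_nrm2_mult_vec[OF C vc] unitary_mult_cadj_vec[OF k'] by (simp add: v_def)
  also have "\<dots> = 0" using \<sigma>i i by (intro sum.neutral) (auto simp: unit_vec_def)
  finally have "h *\<^sub>v v = 0\<^sub>v d" using nrm2_eq_0D[of "h *\<^sub>v v" d] hc vc by simp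
  hence "v = 0\<^sub>v d" using gh g hc vc mult_mat_vec_zero[OF g]
    by (metis assoc_mult_mat_vec one_mult_mat_vec)
  moreover have "nrm2 v = 1"
    unfolding v_def using unitary_nrm2[OF unitary_cadj[OF k']] nrm2_unit_vec[OF i] by simp
  ultimately show False by (simp add: nrm2_sum[of _ d])
qed

lemma cartan_inverse_eq:
  assumes C: "cartan K d h k \<sigma> k'" and g: "g \<in> carrier_mat d d" and gh: "g * h = 1\<^sub>m d"
  shows "g = cadj k' * mat_diag d (\<lambda>i. complex_of_real (1 / \<sigma> i)) * cadj k"
proof -
  have k: "unitary d k" and k': "unitary d k'" using cartan_unitary[OF C] by auto
  have kc: "k \<in> carrier_mat d d" and k'c: "k' \<in> carrier_mat d d" using k k' unitary_carrier by auto
  have h: "h = k * mat_diag d (\<lambda>i. complex_of_real (\<sigma> i)) * k'" using C by (simp add: cartan_def)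
  have hc: "h \<in> carrier_mat d d" using kc k'c by (simp add: h)
  define X where "X = cadj k' * mat_diag d (\<lambda>i. complex_of_real (1 / \<sigma> i)) * cadj k"
  have Xc: "X \<in> carrier_mat d d" using kc k'c by (simp add: X_def)
  have "h * X = 1\<^sub>m d"
  proof (rule mat_eq_by_mult_vec)
    fix v :: "complex vec" assume v: "v \<in> carrier_vec d"
    define u where "u = cadj k *\<^sub>v v"
    have uc: "u \<in> carrier_vec d" using kc v by (simp add: u_def)
    define w where "w = vec d (\<lambda>i. complex_of_real (1 / \<sigma> i) * u $ i)"
    have "X *\<^sub>v v = cadj k' *\<^sub>v w"
      unfolding X_def u_def w_def by (rule mult_mat_diag_mult_vec) (use kc k'c v in auto)
    hence "h *\<^sub>v (X *\<^sub>v v) = k *\<^sub>v vec d (\<lambda>i. complex_of_real (\<sigma> i) * w $ i)"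
      using kc k'c unitary_mult_cadj_vec[OF k'] by (simp add: h mult_mat_diag_mult_vec w_def)
    also have "vec d (\<lambda>i. complex_of_real (\<sigma> i) * w $ i) = u"
      using cartan_inverse_pos[OF C g gh] uc by (intro eq_vecI) (auto simp: w_def less_le)
    finally have "h *\<^sub>v (X *\<^sub>v v) = k *\<^sub>v (cadj k *\<^sub>v v)" by (simp add: u_def)
    thus "(h * X) *\<^sub>v v = 1\<^sub>m d *\<^sub>v v"
      using hc Xc v unitary_mult_cadj_vec[OF k v] by (simp add: assoc_mult_mat_vec[of _ d d _ d])
  qed (use hc Xc in auto)
  thus ?thesis using left_inverse_eq_right_inverse[OF hc Xc g _ gh] by (simp add: X_def)
qed

lemma cadj_eq_of_cartan_inverse:
  assumes C: "cartan K d h k \<sigma> k'" and g: "g \<in> carrier_mat d d" and gh: "g * h = 1\<^sub>m d"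
  shows "cadj g = k * mat_diag d (\<lambda>i. complex_of_real (1 / \<sigma> i)) * k'"
proof -
  have kc: "k \<in> carrier_mat d d" and k'c: "k' \<in> carrier_mat d d"
    using cartan_unitary[OF C] unitary_carrier by auto
  let ?D = "mat_diag d (\<lambda>i. complex_of_real (1 / \<sigma> i))"
  have "cadj (cadj k' * ?D * cadj k) = cadj (cadj k) * cadj (cadj k' * ?D)"
    by (rule cadj_mult[of _ d d _ d]) (use kc k'c in auto)
  also have "cadj (cadj k' * ?D) = cadj ?D * cadj (cadj k')"
    by (rule cadj_mult[of _ d d _ d]) (use k'c in auto)
  finally show ?thesis
    unfolding cartan_inverse_eq[OF C g gh] cadj_mat_diag_real[of d "\<lambda>i. 1 / \<sigma> i"]
    using kc k'c by (simp add: cadj_cadj assoc_mult_mat[of _ d d _ d _ d])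
qed

definition rev_perm_mat :: "nat \<Rightarrow> complex mat" where
  "rev_perm_mat d = Matrix.mat d d (\<lambda>(i,j). if i + j = d - 1 then 1 else 0)"

lemma rev_perm_mat_carrier[simp]: "rev_perm_mat d \<in> carrier_mat d d"
  by (simp add: rev_perm_mat_def)

lemma rev_perm_mat_mult_vec: assumes w: "w \<in> carrier_vec d"
  shows "rev_perm_mat d *\<^sub>v w = vec d (\<lambda>i. w $ (d - 1 - i))"
proof (rule eq_vecI)
  fix i assume "i < dim_vec (vec d (\<lambda>i. w $ (d - 1 - i)))"
  hence i: "i < d" by simp
  have "(rev_perm_mat d *\<^sub>v w) $ i = (\<Sum>l<d. if l = d - 1 - i then w $ (d - 1 - i) else 0)"
    unfolding mult_mat_vec_sum[OF rev_perm_mat_carrier w i]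
    using i by (intro sum.cong) (auto simp: rev_perm_mat_def)
  thus "(rev_perm_mat d *\<^sub>v w) $ i = vec d (\<lambda>i. w $ (d - 1 - i)) $ i" using i by simp
qed (use w in \<open>auto simp: rev_perm_mat_def\<close>)

lemma rev_perm_mat_unitary: "unitary d (rev_perm_mat d)"
proof -
  have cadj: "cadj (rev_perm_mat d) = rev_perm_mat d"
    by (intro eq_matI) (auto simp: cadj_def rev_perm_mat_def add.commute)
  have "rev_perm_mat d * rev_perm_mat d = 1\<^sub>m d"
    by (rule mat_eq_by_mult_vec) (auto simp: assoc_mult_mat_vec[of _ d d _ d] rev_perm_mat_mult_vec)
  thus ?thesis by (simp add: unitary_def cadj)
qed

lemma Kmat_rev_perm_mat: "Kfield K \<Longrightarrow> Kmat K d (rev_perm_mat d)"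
  by (auto simp: Kmat_def rev_perm_mat_def Kfield_zero Kfield_one)

lemma rev_perm_mat_diag:
  "rev_perm_mat d * mat_diag d f * rev_perm_mat d = mat_diag d (\<lambda>i. f (d - 1 - i))"
  by (rule mat_eq_by_mult_vec[of _ d])
    (auto simp: assoc_mult_mat_vec[of _ d d _ d] rev_perm_mat_mult_vec mat_diag_mult_vec)

lemma cartan_of_inverse:
  assumes K: "Kfield K" and C: "cartan K d h k \<sigma> k'"
    and g: "g \<in> carrier_mat d d" and gh: "g * h = 1\<^sub>m d"
  shows "cartan K d g (cadj k' * rev_perm_mat d) (\<lambda>i. 1 / \<sigma> (d - 1 - i)) (rev_perm_mat d * cadj k)"
proof -
  let ?P = "rev_perm_mat d"
  have k: "unitary d k" and k': "unitary d k'" using cartan_unitary[OF C] by auto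
  have kc: "k \<in> carrier_mat d d" and k'c: "k' \<in> carrier_mat d d" using k k' unitary_carrier by auto
  have kK: "Kmat K d k" and k'K: "Kmat K d k'" using C by (auto simp: cartan_def unitaryK_def)
  have pos: "\<And>i. i < d \<Longrightarrow> 0 < \<sigma> i" using cartan_inverse_pos[OF C g gh] .
  have mono: "\<And>i j. i \<le> j \<Longrightarrow> j < d \<Longrightarrow> \<sigma> j \<le> \<sigma> i" using C by (auto simp: cartan_def)
  have "cadj k' * ?P * mat_diag d (\<lambda>i. complex_of_real (1 / \<sigma> (d - 1 - i))) * (?P * cadj k)
      = cadj k' * (?P * mat_diag d (\<lambda>i. complex_of_real (1 / \<sigma> (d - 1 - i))) * ?P) * cadj k"
    using kc k'c by (simp add: assoc_mult_mat[of _ d d _ d _ d])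
  also have "\<dots> = g"
    unfolding rev_perm_mat_diag cartan_inverse_eq[OF C g gh]
    by (auto intro!: arg_cong2[of _ _ _ _ "(*)"] mat_diag_cong)
  finally show ?thesis
    unfolding cartan_def unitaryK_def
    using unitary_mult[OF unitary_cadj[OF k'] rev_perm_mat_unitary]
      unitary_mult[OF rev_perm_mat_unitary unitary_cadj[OF k]]
      Kmat_mult[OF K Kmat_cadj[OF K k'K] Kmat_rev_perm_mat[OF K]]
      Kmat_mult[OF K Kmat_rev_perm_mat[OF K] Kmat_cadj[OF K kK]] pos
    by (auto simp: unitary_def less_imp_le intro!: frac_le mono)
qed

lemma cartan_minv_sv:
  assumes K: "Kfield K" and d: "1 < d" and g: "g \<in> carrier_mat d d" "invertible_mat g"
    and C: "cartan K d (minv d g) k \<sigma> k'"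
  shows "sv K d g 0 = 1 / \<sigma> (d - 1) \<and> sv K d g 1 = 1 / \<sigma> (d - 2)"
proof -
  have "g * minv d g = 1\<^sub>m d" using minv_inverse[OF g] by simp
  from cartan_eq_sv[OF cartan_of_inverse[OF K C g(1) this] d]
  have "sv K d g 0 = 1 / \<sigma> (d - 1) \<and> sv K d g 1 = 1 / \<sigma> (d - 1 - 1)" by simp
  moreover have "d - 1 - 1 = d - 2" by arith
  ultimately show ?thesis by simp
qed

lemma cartan_sv_gap_top:
  assumes C: "cartan K d g k \<sigma> k'" and d: "1 < d" and gap: "sv K d g 1 \<le> s * sv K d g 0"
    and i: "i < d" "i \<noteq> 0"
  shows "\<sigma> i \<le> s * \<sigma> 0"
proof -
  have "\<sigma> i \<le> \<sigma> 1" using C i by (auto simp: cartan_def)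
  also have "\<dots> \<le> s * \<sigma> 0" using gap cartan_eq_sv[OF C d] by simp
  finally show ?thesis .
qed

lemma cartan_minv_sv_gap_bottom:
  assumes K: "Kfield K" and d: "1 < d" and g: "g \<in> carrier_mat d d" "invertible_mat g"
    and C: "cartan K d (minv d g) k \<sigma> k'" and gap: "sv K d g 1 \<le> s * sv K d g 0"
    and i: "i < d" "i \<noteq> d - 1"
  shows "1 / \<sigma> i \<le> s * (1 / \<sigma> (d - 1))"
proof -
  have "\<And>j. j < d \<Longrightarrow> 0 < \<sigma> j" using cartan_inverse_pos[OF C g(1)] minv_inverse[OF g] by blast
  hence "0 < \<sigma> i" "0 < \<sigma> (d - 2)" using i d by auto
  moreover have "\<sigma> (d - 2) \<le> \<sigma> i" using C i by (auto simp: cartan_def)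
  ultimately have "1 / \<sigma> i \<le> 1 / \<sigma> (d - 2)" by (intro divide_left_mono) auto
  also have "\<dots> \<le> s * (1 / \<sigma> (d - 1))" using gap cartan_minv_sv[OF K d g C] by simp
  finally show ?thesis .
qed

section \<open>The contraction estimate\<close>

lemma dP_unit_vec_mult_mat_diag:
  assumes A: "unitary d A" and B: "unitary d B" and j: "j < d" and p: "p \<in> carrier_vec d"
    and s: "0 \<le> s" and ej: "e j \<noteq> 0" and dom: "\<And>i. i < d \<Longrightarrow> i \<noteq> j \<Longrightarrow> cmod (e i) \<le> s * cmod (e j)"
    and pj: "(B *\<^sub>v p) $ j \<noteq> 0"
  shows "dP (A *\<^sub>v unit_vec d j) ((A * mat_diag d e * B) *\<^sub>v p)
    \<le> s * sqrt (nrm2 p) / cmod ((B *\<^sub>v p) $ j)"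
proof -
  define q where "q = B *\<^sub>v p"
  define z where "z = vec d (\<lambda>i. e i * q $ i)"
  have Bc: "B \<in> carrier_mat d d" using unitary_carrier[OF B] .
  have qc: "q \<in> carrier_vec d" using Bc p by (simp add: q_def)
  have "(A * mat_diag d e * B) *\<^sub>v p = A *\<^sub>v z"
    unfolding z_def q_def using unitary_carrier[OF A] Bc p by (rule mult_mat_diag_mult_vec)
  hence "dP (A *\<^sub>v unit_vec d j) ((A * mat_diag d e * B) *\<^sub>v p) = dP (unit_vec d j) z"
    using unitary_dP[OF A] by (simp add: z_def)
  also have "\<dots> \<le> sqrt ((s * cmod (e j))\<^sup>2 * nrm2 p / (cmod (e j) * cmod (q $ j))\<^sup>2)"
  proof (rule dP_unit_vec_le[OF j])
    show "0 < (cmod (e j) * cmod (q $ j))\<^sup>2" using ej pj by (simp add: q_def)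
    show "(cmod (e j) * cmod (q $ j))\<^sup>2 \<le> (cmod (z $ j))\<^sup>2" using j by (simp add: z_def norm_mult)
    have "(\<Sum>i\<in>{..<d} - {j}. (cmod (z $ i))\<^sup>2) \<le> (\<Sum>i\<in>{..<d} - {j}. (s * cmod (e j))\<^sup>2 * (cmod (q $ i))\<^sup>2)"
    proof (rule sum_mono)
      fix i assume "i \<in> {..<d} - {j}"
      hence "(cmod (e i))\<^sup>2 \<le> (s * cmod (e j))\<^sup>2" "i < d" using dom by (auto intro: power_mono)
      thus "(cmod (z $ i))\<^sup>2 \<le> (s * cmod (e j))\<^sup>2 * (cmod (q $ i))\<^sup>2"
        using mult_right_mono[of _ _ "(cmod (q $ i))\<^sup>2"] by (simp add: z_def norm_mult power_mult_distrib)
    qed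
    also have "\<dots> \<le> (\<Sum>i<d. (s * cmod (e j))\<^sup>2 * (cmod (q $ i))\<^sup>2)" by (rule sum_mono2) auto
    also have "\<dots> = (s * cmod (e j))\<^sup>2 * nrm2 q"
      using qc by (simp add: nrm2_sum[of _ d] sum_distrib_left)
    also have "nrm2 q = nrm2 p" using unitary_nrm2[OF B p] by (simp add: q_def)
    finally show "(\<Sum>i\<in>{..<d} - {j}. (cmod (z $ i))\<^sup>2) \<le> (s * cmod (e j))\<^sup>2 * nrm2 p" .
  qed (use z_def in simp)
  also have "\<dots> = s * sqrt (nrm2 p) / cmod (q $ j)"
    using s ej by (simp add: real_sqrt_divide real_sqrt_mult power_mult_distrib)
  finally show ?thesis by (simp add: q_def)
qed

lemma Kfield_phase: assumes K: "Kfield K" and \<alpha>: "\<alpha> \<in> K"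
  obtains c where "c \<in> K" "cmod c = 1" "c * of_real (cmod \<alpha>) = \<alpha>" "cnj c * \<alpha> = of_real (cmod \<alpha>)"
proof -
  define c where "c = (if \<alpha> = 0 then 1 else \<alpha> / of_real (cmod \<alpha>))"
  have "cnj c * \<alpha> = of_real (cmod \<alpha>)"
  proof (cases "\<alpha> = 0")
    case False
    have "cnj c * \<alpha> = cnj \<alpha> * \<alpha> / of_real (cmod \<alpha>)" using False by (simp add: c_def)
    also have "cnj \<alpha> * \<alpha> = of_real ((cmod \<alpha>)\<^sup>2)"
      by (metis complex_norm_square mult.commute of_real_power)
    finally show ?thesis using False by (simp add: power2_eq_square)
  qed (simp add: c_def)
  moreover have "c \<in> K" using K \<alpha> by (auto simp: c_def intro!: Kfield_divide Kfield_of_real Kfield_one)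
  ultimately show ?thesis using that by (auto simp: c_def norm_divide)
qed

lemma hinner_nrm2_add_in_phase:
  assumes x: "x \<in> carrier_vec d" and a: "a \<in> carrier_vec d" "nrm2 a = 1" and t: "0 \<le> t"
    and c: "cmod c = 1" "c * of_real (cmod (hinner x a)) = hinner x a"
      "cnj c * hinner x a = of_real (cmod (hinner x a))"
  shows "cmod (hinner (x + (of_real t * c) \<cdot>\<^sub>v a) a) = cmod (hinner x a) + t"
    and "nrm2 (x + (of_real t * c) \<cdot>\<^sub>v a) = nrm2 x + 2 * t * cmod (hinner x a) + t\<^sup>2"
proof -
  have "hinner (x + (of_real t * c) \<cdot>\<^sub>v a) a = c * of_real (cmod (hinner x a) + t)"
    using x a hinner_self[OF a(1)] c(2) by (simp add: hinner_add_left hinner_smult_left algebra_simps)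
  thus "cmod (hinner (x + (of_real t * c) \<cdot>\<^sub>v a) a) = cmod (hinner x a) + t"
    using t c(1) by (simp add: norm_mult del: of_real_add)
  have re: "Re c * Re (hinner x a) + Im c * Im (hinner x a) = cmod (hinner x a)"
    using arg_cong[OF c(3), of Re] by simp
  show "nrm2 (x + (of_real t * c) \<cdot>\<^sub>v a) = nrm2 x + 2 * t * cmod (hinner x a) + t\<^sup>2"
    using x a c(1) by (simp add: nrm2_add nrm2_smult hinner_smult_right norm_mult)
      (simp add: re[symmetric] algebra_simps)
qed

lemma sq_theta_norm_le_arith:
  fixes \<theta> N \<alpha> t :: real
  assumes \<theta>: "0 < \<theta>" "\<theta> \<le> 1" and N: "0 \<le> N" and \<alpha>: "0 \<le> \<alpha>" and t: "0 \<le> t"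
    and t2: "t\<^sup>2 = 4 / 9 * (\<theta>\<^sup>2 * N)"
  shows "\<theta>\<^sup>2 * (N + 2 * t * \<alpha> + t\<^sup>2) \<le> (2 * (\<alpha> + t))\<^sup>2"
proof -
  have "\<theta>\<^sup>2 \<le> 1" using \<theta> by (simp add: power_le_one)
  hence "\<theta>\<^sup>2 * (t * \<alpha>) \<le> t * \<alpha>" "\<theta>\<^sup>2 * t\<^sup>2 \<le> t\<^sup>2" using t \<alpha> by (auto intro!: mult_left_le_one_le)
  moreover have "\<theta>\<^sup>2 * N + t\<^sup>2 \<le> 4 * t\<^sup>2" using t2 mult_nonneg_nonneg[OF zero_le_power2[of \<theta>] N] by linarith
  moreover have "0 \<le> t * \<alpha>" using t \<alpha> by simp
  moreover have "\<theta>\<^sup>2 * (N + 2 * t * \<alpha> + t\<^sup>2) = \<theta>\<^sup>2 * N + 2 * (\<theta>\<^sup>2 * (t * \<alpha>)) + \<theta>\<^sup>2 * t\<^sup>2"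
    by (simp add: algebra_simps)
  moreover have "(2 * (\<alpha> + t))\<^sup>2 = 4 * \<alpha>\<^sup>2 + 8 * (t * \<alpha>) + 4 * t\<^sup>2"
    by (simp add: power2_sum algebra_simps)
  ultimately show ?thesis by (smt (verit) zero_le_power2)
qed

text \<open>The witness is \<open>x + t c a\<close> with \<open>t = 2\<theta>|x|/3\<close> and \<open>c\<close> the phase of \<open>\<langle>x, a\<rangle>\<close>.\<close>
lemma exists_near_vec_large_component:
  assumes K: "Kfield K" and x: "x \<in> PK K d" and a: "Kvec K d a" "nrm2 a = 1"
    and \<theta>: "0 < \<theta>" "\<theta> \<le> 1"
  obtains p where "p \<in> PK K d" "dP x p < \<theta>" "\<theta> * sqrt (nrm2 p) \<le> 2 * cmod (hinner p a)"
proof -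
  have xc: "x \<in> carrier_vec d" and x0: "x \<noteq> 0\<^sub>v d" and xK: "Kvec K d x"
    using x by (auto simp: PK_def Kvec_def)
  have ac: "a \<in> carrier_vec d" using a by (simp add: Kvec_def)
  define N \<alpha> where "N = nrm2 x" and "\<alpha> = cmod (hinner x a)"
  have N: "0 < N" using nrm2_pos[OF xc x0] by (simp add: N_def)
  define t where "t = 2 * \<theta> * sqrt N / 3"
  have t: "0 < t" "t\<^sup>2 = 4 / 9 * (\<theta>\<^sup>2 * N)"
    using \<theta> N by (auto simp: t_def power_mult_distrib power_divide)
  obtain c where c: "c \<in> K" "cmod c = 1" "c * of_real \<alpha> = hinner x a" "cnj c * hinner x a = of_real \<alpha>"
    using Kfield_phase[OF K hinner_in_K[OF K xK a(1)]] by (auto simp: \<alpha>_def)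
  define p where "p = x + (of_real t * c) \<cdot>\<^sub>v a"
  have pc: "p \<in> carrier_vec d" using xc ac by (simp add: p_def)
  note add_in_phase = hinner_nrm2_add_in_phase[OF xc ac a(2) less_imp_le[OF t(1)] c(2-4)[unfolded \<alpha>_def]]
  have hp: "cmod (hinner p a) = \<alpha> + t" and np: "nrm2 p = N + 2 * t * \<alpha> + t\<^sup>2"
    using add_in_phase by (simp_all add: p_def N_def \<alpha>_def)
  have "\<theta>\<^sup>2 * nrm2 p \<le> (2 * cmod (hinner p a))\<^sup>2"
    unfolding np hp using \<theta> N t by (intro sq_theta_norm_le_arith) (auto simp: \<alpha>_def)
  hence "sqrt (\<theta>\<^sup>2 * nrm2 p) \<le> sqrt ((2 * cmod (hinner p a))\<^sup>2)" by (rule real_sqrt_le_mono)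
  hence bound: "\<theta> * sqrt (nrm2 p) \<le> 2 * cmod (hinner p a)" using \<theta> by (simp add: real_sqrt_mult)
  have p0: "p \<noteq> 0\<^sub>v d"
  proof
    assume "p = 0\<^sub>v d"
    hence "\<alpha> + t = 0" using ac hp by (simp add: hinner_sum)
    thus False using t(1) by (simp add: \<alpha>_def add_nonneg_eq_0_iff)
  qed
  have "x - p = (- (of_real t * c)) \<cdot>\<^sub>v a" unfolding p_def using xc ac by (intro eq_vecI) auto
  hence "nrm2 (x - p) = t\<^sup>2" using ac a(2) c(2) by (simp add: nrm2_smult norm_mult)
  hence "dP x p \<le> sqrt (t\<^sup>2 / N)" using dP_le_sqrt_nrm2_diff[OF xc x0 pc p0] by (simp add: N_def)
  also have "\<dots> = 2 * \<theta> / 3" using N \<theta> t(1) by (simp add: t_def real_sqrt_divide)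
  also have "\<dots> < \<theta>" using \<theta> by simp
  finally have "dP x p < \<theta>" .
  moreover have "p \<in> PK K d"
    using xK a(1) c(1) K p0
    by (auto simp: PK_def Kvec_def p_def intro!: Kfield_add[OF K] Kfield_mult[OF K] Kfield_of_real[OF K])
  ultimately show ?thesis using that bound by blast
qed

lemma exists_near_vec_image_close:
  assumes K: "Kfield K" and A: "unitary d A" and B: "unitaryK K d B" and j: "j < d"
    and \<theta>: "0 < \<theta>" "\<theta> \<le> 1" and x: "x \<in> PK K d" and s: "0 \<le> s" and ej: "e j \<noteq> 0"
    and dom: "\<And>i. i < d \<Longrightarrow> i \<noteq> j \<Longrightarrow> cmod (e i) \<le> s * cmod (e j)"
  obtains p where "p \<in> PK K d" "dP x p < \<theta>"
    "dP (A *\<^sub>v unit_vec d j) ((A * mat_diag d e * B) *\<^sub>v p) \<le> 2 * s / \<theta>"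
proof -
  have Bu: "unitary d B" and BK: "Kmat K d B" using B by (auto simp: unitaryK_imp_unitary unitaryK_def)
  define a where "a = cadj B *\<^sub>v unit_vec d j"
  have aK: "Kvec K d a"
    unfolding a_def by (rule Kmat_mult_vec[OF K Kmat_cadj[OF K BK] Kvec_unit_vec[OF K]])
  have "nrm2 a = 1"
    unfolding a_def using unitary_nrm2[OF unitary_cadj[OF Bu]] nrm2_unit_vec[OF j] by simp
  then obtain p where p: "p \<in> PK K d" "dP x p < \<theta>" "\<theta> * sqrt (nrm2 p) \<le> 2 * cmod (hinner p a)"
    using exists_near_vec_large_component[OF K x aK _ \<theta>] by blast
  have pc: "p \<in> carrier_vec d" and p0: "p \<noteq> 0\<^sub>v d" using PK_carrier[OF p(1)] by auto
  have Bp: "(B *\<^sub>v p) $ j = hinner p a" unfolding a_def by (rule unitary_mult_vec_index[OF Bu j pc])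
  have "0 < \<theta> * sqrt (nrm2 p)" using \<theta> nrm2_pos[OF pc p0] by simp
  hence pos: "0 < cmod (hinner p a)" using p(3) by linarith
  have "dP (A *\<^sub>v unit_vec d j) ((A * mat_diag d e * B) *\<^sub>v p) \<le> s * sqrt (nrm2 p) / cmod (hinner p a)"
    using dP_unit_vec_mult_mat_diag[of d A B j p s e, OF A Bu j pc s ej dom] pos Bp by simp
  also have "\<dots> \<le> 2 * s / \<theta>"
    using p(3) pos \<theta> s by (simp add: field_simps) (metis mult.assoc mult.commute mult_left_mono)
  finally show ?thesis using that p(1,2) by blast
qed

lemma pingpong_top_direction_dist_U:
  assumes K: "Kfield K" and d: "1 < d" and GL: "\<forall>i\<in>{1,2}. \<Gamma> i \<subseteq> GLK K d"
    and pp: "pingpong K d \<Gamma> U V" and pU: "\<forall>i\<in>{1,2}. projset K d (U i)"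
    and \<theta>: "0 < \<theta>" "\<theta> \<le> 1" and x: "\<forall>i\<in>{1,2}. x i \<in> U i \<and> ballP K d (x i) \<theta> \<subseteq> U i"
    and red: "reduced d \<Gamma> gs" and a: "a \<in> {1,2}" "hd gs \<in> \<Gamma> a" "\<forall>j\<in>{1,2}. hd gs \<in> \<Gamma> j \<longrightarrow> j = a"
    and g: "g = foldr (*) gs (1\<^sub>m d)" and C: "cartan K d g k \<sigma> k'"
    and s: "0 \<le> s" and gap: "sv K d g 1 \<le> s * sv K d g 0"
  shows "distP (k *\<^sub>v unit_vec d 0) (U a) \<le> 2 * s / \<theta>"
proof -
  have gc: "g \<in> carrier_mat d d" and gi: "invertible_mat g"
    using foldr_mult_GLK[OF reduced_set_GLK[OF red GL]] by (auto simp: g)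
  have pos: "\<And>i. i < d \<Longrightarrow> 0 < \<sigma> i"
    using cartan_inverse_pos[OF C] minv_inverse[OF gc gi] by blast
  have dom: "cmod (complex_of_real (\<sigma> i)) \<le> s * cmod (complex_of_real (\<sigma> 0))" if "i < d" "i \<noteq> 0" for i
    using cartan_sv_gap_top[OF C d gap that] pos[of i] pos[of 0] that d by (simp add: abs_of_pos)
  have "last gs \<in> \<Gamma> 1 \<union> \<Gamma> 2" using reduced_mem[OF red, of "last gs"] red by (simp add: reduced_def)
  then obtain b c where bc: "b \<in> {1,2}" "c \<in> {1,2}" "b \<noteq> c" "last gs \<in> \<Gamma> c"
    by (rule other_index_exists)
  have "x b \<in> PK K d" using x pU bc(1) by (auto simp: projset_def)
  moreover have "unitary d k" "unitaryK K d k'" using C cartan_unitary[OF C] by (auto simp: cartan_def)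
  ultimately obtain p where p: "p \<in> PK K d" "dP (x b) p < \<theta>"
      "dP (k *\<^sub>v unit_vec d 0) ((k * mat_diag d (\<lambda>i. complex_of_real (\<sigma> i)) * k') *\<^sub>v p) \<le> 2 * s / \<theta>"
    using exists_near_vec_image_close[where e = "\<lambda>i. complex_of_real (\<sigma> i)" and d = d and A = k,
        OF K _ _ _ \<theta> _ s _ dom] pos[of 0] d by auto
  have "p \<in> U b" using x bc(1) p(1,2) by (auto simp: ballP_def)
  hence "p \<in> closP K d (U b)" using projset_subset_closP pU bc(1) by blast
  moreover have "\<forall>i\<in>{1,2}. \<Gamma> i \<subseteq> carrier_mat d d" using GL by (auto simp: GLK_def Kmat_def)
  ultimately have "g *\<^sub>v p \<in> U a"
    unfolding g using pingpong_word_mult_vec[OF pp pU _ red a bc] by blast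
  hence "distP (k *\<^sub>v unit_vec d 0) (U a) \<le> dP (k *\<^sub>v unit_vec d 0) (g *\<^sub>v p)"
    using pU a(1) unitary_carrier[of d k] cartan_unitary[OF C]
    by (intro distP_le_dP[of _ _ d]) (auto simp: projset_def PK_def Kvec_def)
  thus ?thesis using p(3) C by (simp add: cartan_def)
qed

lemma pingpong_minv_hyperplane_dist_V:
  assumes K: "Kfield K" and d: "1 < d" and GL: "\<forall>i\<in>{1,2}. \<Gamma> i \<subseteq> GLK K d"
    and pp: "pingpong K d \<Gamma> U V" and pV: "\<forall>i\<in>{1,2}. projset K d (V i)"
    and \<theta>: "0 < \<theta>" "\<theta> \<le> 1" and y: "\<forall>i\<in>{1,2}. y i \<in> V i \<and> ballP K d (y i) \<theta> \<subseteq> V i"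
    and red: "reduced d \<Gamma> gs" and a: "a \<in> {1,2}" "last gs \<in> \<Gamma> a" "\<forall>j\<in>{1,2}. last gs \<in> \<Gamma> j \<longrightarrow> j = a"
    and g: "g = foldr (*) gs (1\<^sub>m d)" and C: "cartan K d (minv d g) k \<sigma> k'"
    and w: "w \<in> PK K d" and hw: "hyp K d w = spanFirst K d k"
    and s: "0 \<le> s" and gap: "sv K d g 1 \<le> s * sv K d g 0"
  shows "distP w (V a) \<le> 2 * s / \<theta>"
proof -
  have gc: "g \<in> carrier_mat d d" and gi: "invertible_mat g"
    using foldr_mult_GLK[OF reduced_set_GLK[OF red GL]] by (auto simp: g)
  have gh: "g * minv d g = 1\<^sub>m d" using minv_inverse[OF gc gi] by simp
  have pos: "\<And>i. i < d \<Longrightarrow> 0 < \<sigma> i" using cartan_inverse_pos[OF C gc gh] .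
  have k: "unitary d k" using cartan_unitary[OF C] by simp
  have dom: "cmod (complex_of_real (1 / \<sigma> i)) \<le> s * cmod (complex_of_real (1 / \<sigma> (d - 1)))"
    if "i < d" "i \<noteq> d - 1" for i
    using cartan_minv_sv_gap_bottom[OF K d gc gi C gap that] pos[of i] pos[of "d - 1"] that d
    by (simp add: norm_divide abs_of_pos)
  have "hd gs \<in> \<Gamma> 1 \<union> \<Gamma> 2" using reduced_hd[OF red] by simp
  then obtain b c where bc: "b \<in> {1,2}" "c \<in> {1,2}" "b \<noteq> c" "hd gs \<in> \<Gamma> c"
    by (rule other_index_exists)
  have "y b \<in> PK K d" using y pV bc(1) by (auto simp: projset_def)
  moreover have "unitaryK K d k'" using C by (simp add: cartan_def)
  ultimately obtain u where u: "u \<in> PK K d" "dP (y b) u < \<theta>"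
      "dP (k *\<^sub>v unit_vec d (d - 1)) ((k * mat_diag d (\<lambda>i. complex_of_real (1 / \<sigma> i)) * k') *\<^sub>v u)
        \<le> 2 * s / \<theta>"
    using exists_near_vec_image_close[where e = "\<lambda>i. complex_of_real (1 / \<sigma> i)" and d = d,
        OF K k _ _ \<theta> _ s _ dom]
      pos[of "d - 1"] d by auto
  have "u \<in> V b" using y bc(1) u(1,2) by (auto simp: ballP_def)
  hence "u \<in> closP K d (V b)" using projset_subset_closP pV bc(1) by blast
  hence gu: "cadj g *\<^sub>v u \<in> V a"
    unfolding g using pingpong_word_cadj_mult_vec[OF K pp pV GL red] bc a by auto
  obtain c' where c': "c' \<noteq> 0" "w = c' \<cdot>\<^sub>v (k *\<^sub>v unit_vec d (d - 1))"
    using normal_of_hyp_eq_spanFirst[OF K _ k w hw] d by auto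
  have "distP w (V a) \<le> dP w (cadj g *\<^sub>v u)"
    using pV a(1) gc u(1) w by (intro distP_le_dP[OF gu]) (auto simp: projset_def PK_def Kvec_def)
  also have "\<dots> = dP (k *\<^sub>v unit_vec d (d - 1)) (cadj g *\<^sub>v u)"
    unfolding c'(2) using unitary_carrier[OF k] gc PK_carrier[OF u(1)]
    by (intro dP_smult_left[of _ d _ c', OF _ _ c'(1)]) auto
  finally show ?thesis using u(3) cadj_eq_of_cartan_inverse[OF C gc gh] by simp
qed

theorem lemma3p1:
  fixes K :: "complex set" and d :: nat
    and \<Gamma> :: "nat \<Rightarrow> complex mat set" and U V :: "nat \<Rightarrow> complex vec set"
    and x y :: "nat \<Rightarrow> complex vec" and \<epsilon> \<theta> :: real
    and gs :: "complex mat list" and g :: "complex mat"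
  assumes K: "Kfield K"
    and d: "d \<ge> 2"
    and sg: "semigroupK K d (\<Gamma> 1)" "semigroupK K d (\<Gamma> 2)"
    and opU: "openP K d (U 1)" "openP K d (U 2)"
    and opV: "openP K d (V 1)" "openP K d (V 2)"
    and pp: "pingpong K d \<Gamma> U V"
    and eps: "\<epsilon> > 0"
    and sep: "\<forall>i\<in>{1,2}. \<forall>j\<in>{1,2}. i \<noteq> j \<longrightarrow>
              (\<forall>p\<in>closP K d (U i). \<forall>u\<in>closP K d (V j).
                 \<forall>q\<in>PK K d \<inter> hyp K d u. dP p q \<ge> \<epsilon>)"
    and th: "0 < \<theta>" "\<theta> < \<epsilon>\<^sup>2"
    and xy: "\<forall>i\<in>{1,2}. x i \<in> U i \<and> y i \<in> V i \<and>
                 ballP K d (x i) \<theta> \<subseteq> U i \<and> ballP K d (y i) \<theta> \<subseteq> V i"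
    and red: "reduced d \<Gamma> gs"
    and gdef: "g = foldr (*) gs (1\<^sub>m d)"
    and notF: "g \<in> gen2 d (\<Gamma> 1) (\<Gamma> 2) \<and>
               \<not> (sv K d g 0 / sv K d g 1 < max (16 / (\<epsilon> * \<theta>)) (8 * sqrt (real d - 1) / \<epsilon>\<^sup>2))"
  shows "(\<forall>i\<in>{1,2}. (gs ! 0 \<in> \<Gamma> i \<and> (\<forall>j\<in>{1,2}. gs ! 0 \<in> \<Gamma> j \<longrightarrow> j = i)) \<longrightarrow>
            (\<forall>k \<sigma> k'. cartan K d g k \<sigma> k' \<longrightarrow>
               distP (k *\<^sub>v unit_vec d 0) (U i) \<le> \<epsilon> / 8))
       \<and> (\<forall>i\<in>{1,2}. (last gs \<in> \<Gamma> i \<and> (\<forall>j\<in>{1,2}. last gs \<in> \<Gamma> j \<longrightarrow> j = i)) \<longrightarrow>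
            (\<forall>k \<sigma> k'. cartan K d (minv d g) k \<sigma> k' \<longrightarrow>
               (\<forall>w\<in>PK K d. hyp K d w = spanFirst K d k \<longrightarrow>
                  distP w (V i) \<le> \<epsilon> / 8)))"
proof -
  have GL: "\<forall>i\<in>{1,2}. \<Gamma> i \<subseteq> GLK K d" using sg by (auto simp: semigroupK_def)
  have pU: "\<forall>i\<in>{1,2}. projset K d (U i)" and pV: "\<forall>i\<in>{1,2}. projset K d (V i)"
    using opU opV by (auto simp: openP_def)
  have xU: "\<forall>i\<in>{1,2}. x i \<in> U i \<and> ballP K d (x i) \<theta> \<subseteq> U i"
    and yV: "\<forall>i\<in>{1,2}. y i \<in> V i \<and> ballP K d (y i) \<theta> \<subseteq> V i" using xy by auto
  have d1: "1 < d" using d by simp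
  have x1: "x 1 \<in> closP K d (U 1)" and y2: "y 2 \<in> closP K d (V 2)"
    using xy projset_subset_closP pU pV by blast+
  have "\<forall>q\<in>PK K d \<inter> hyp K d (y 2). \<epsilon> \<le> dP (x 1) q" using sep x1 y2 by auto
  hence "\<epsilon> \<le> 1"
    using x1 y2 by (intro hyp_dP_lower_bound_le_1[OF K d]) (auto simp: closP_def PK_def Kvec_def)
  hence \<theta>: "\<theta> \<le> 1" using th eps by (smt (verit) power_le_one)
  have gap: "sv K d g 1 \<le> \<epsilon> * \<theta> / 16 * sv K d g 0" if "cartan K d g k \<sigma> k'" for k \<sigma> k'
    using sv_gap_of_ratio[OF that d1 eps th(1)] notF by blast
  have s: "0 \<le> \<epsilon> * \<theta> / 16" "2 * (\<epsilon> * \<theta> / 16) / \<theta> = \<epsilon> / 8" using eps th by auto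
  show ?thesis
  proof (intro conjI ballI impI allI)
    fix i k \<sigma> k' assume i: "i \<in> {1,2}" and a: "gs ! 0 \<in> \<Gamma> i \<and> (\<forall>j\<in>{1,2}. gs ! 0 \<in> \<Gamma> j \<longrightarrow> j = i)"
      and C: "cartan K d g k \<sigma> k'"
    have "distP (k *\<^sub>v unit_vec d 0) (U i) \<le> 2 * (\<epsilon> * \<theta> / 16) / \<theta>"
      using pingpong_top_direction_dist_U[OF K d1 GL pp pU th(1) \<theta> xU red i _ _ gdef C s(1) gap[OF C]] a red
      by (simp add: reduced_def hd_conv_nth)
    thus "distP (k *\<^sub>v unit_vec d 0) (U i) \<le> \<epsilon> / 8" by (simp only: s(2))
  next
    fix i k \<sigma> k' w assume i: "i \<in> {1,2}" and a: "last gs \<in> \<Gamma> i \<and> (\<forall>j\<in>{1,2}. last gs \<in> \<Gamma> j \<longrightarrow> j = i)"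
      and C: "cartan K d (minv d g) k \<sigma> k'" and w: "w \<in> PK K d" "hyp K d w = spanFirst K d k"
    have gc: "g \<in> carrier_mat d d" and gi: "invertible_mat g"
      using foldr_mult_GLK[OF reduced_set_GLK[OF red GL]] by (auto simp: gdef)
    have "g * minv d g = 1\<^sub>m d" using minv_inverse[OF gc gi] by simp
    from gap[OF cartan_of_inverse[OF K C gc this]]
    have "distP w (V i) \<le> 2 * (\<epsilon> * \<theta> / 16) / \<theta>"
      using pingpong_minv_hyperplane_dist_V[OF K d1 GL pp pV th(1) \<theta> yV red i _ _ gdef C w s(1)] a
      by blast
    thus "distP w (V i) \<le> \<epsilon> / 8" by (simp only: s(2))
  qed
qed

end
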